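(* Let $\Gamma$ be a countably infinite group acting minimally and continuously on a compact metrizable space $X$ such that $X$ consists of more than one $\Gamma$-orbit. Let $x_1\in X$ have trivial stabilizer, and let $f:X\setminus\{x_1\}\to\{1,-1\}$ be continuous and not extendable to a continuous function on $X$. Let $\Gamma\curvearrowright X_f$ and $\pi_f:X_f\to X$ be the associated McMahon extension. Set $X_+=f^{-1}(1)$ and $X_-=f^{-1}(-1)$. Then $\Gamma\curvearrowright X_f$ is null if and only if $\Gamma\curvearrowright X$ is null and the pair $(X_+,X_-)$ does not have arbitrarily large finite independence sets.
   Context: McMahon extension: there is a minimal continuous action $\Gamma\curvearrowright X_f$ on a compact metrizable space with a $\Gamma$-equivariant continuous surjection $\pi_f:X_f\to X$ such that $\pi_f^{-1}(x)$ is one point for $x\notin\Gamma x_1$ and two points for $x\in\Gamma x_1$, and $f\circ\pi_f$ on $X_f\setminus\pi_f^{-1}(x_1)$ extends to a continuous $\tilde f:X_f\to\{1,-1\}$; it is unique up to conjugacy as an extension of $X$. Concretely: pick $x_0\in X\setminus\Gamma x_1$, let $W$ be the Stone–Čech compactification of $\Gamma x_0$ (with topology from $X$), $\pi_W:W\to X$ the extension of the inclusion, $f_W$ the continuous extension of $f\circ\pi_W|_{\Gamma x_0}$ to $W$; define $w_1\sim w_2$ iff $\pi_W(w_1)=\pi_W(w_2)$ and $f_W(sw_1)=f_W(sw_2)$ for all $s\in\Gamma$; then $X_f=W/\!\sim$. For subsets $A_1,A_2\subseteq X$, a set $M\subseteq\Gamma$ is an independence set for $(A_1,A_2)$ if $\bigcap_{s\in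 F}s^{-1}A_{\omega(s)}\neq\emptyset$ for every nonempty finite $F\subseteq M$ and every $\omega\in\{1,2\}^F$. Null: for every sequence $\mathfrak s=\{s_n\}$ in $\Gamma$ and finite open cover $\mathcal U$, $\limsup_n\frac1n\log N(\bigvee_{i=1}^n s_i^{-1}\mathcal U)=0$, $N$ the minimal size of a subcover. *)

theory Defs
  imports "HOL-Analysis.Analysis" "HOL-Algebra.Group"
begin

definition cont_action :: "('g,'m) monoid_scheme \<Rightarrow> 'a topology \<Rightarrow> ('g \<Rightarrow> 'a \<Rightarrow> 'a) \<Rightarrow> bool" where
  "cont_action G X act \<longleftrightarrow>
     (\<forall>s\<in>carrier G. continuous_map X X (act s)) \<and>
     (\<forall>x\<in>topspace X. act \<one>\<^bsub>G\<^esub> x = x) \<and>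
     (\<forall>s\<in>carrier G. \<forall>t\<in>carrier G. \<forall>x\<in>topspace X. act (s \<otimes>\<^bsub>G\<^esub> t) x = act s (act t x))"

definition orbit_of :: "('g,'m) monoid_scheme \<Rightarrow> ('g \<Rightarrow> 'a \<Rightarrow> 'a) \<Rightarrow> 'a \<Rightarrow> 'a set" where
  "orbit_of G act x = (\<lambda>s. act s x) ` carrier G"

definition minimal_action :: "('g,'m) monoid_scheme \<Rightarrow> 'a topology \<Rightarrow> ('g \<Rightarrow> 'a \<Rightarrow> 'a) \<Rightarrow> bool" where
  "minimal_action G X act \<longleftrightarrow> topspace X \<noteq> {} \<and>
     (\<forall>A. closedin X A \<and> A \<noteq> {} \<and> (\<forall>s\<in>carrier G. \<forall>x\<in>A. act s x \<in> A) \<longrightarrow> A = topspace X)"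

definition preimg :: "'a topology \<Rightarrow> ('g \<Rightarrow> 'a \<Rightarrow> 'a) \<Rightarrow> 'g \<Rightarrow> 'a set \<Rightarrow> 'a set" where
  "preimg X act s A = {x \<in> topspace X. act s x \<in> A}"

definition join_cover :: "'a topology \<Rightarrow> ('g \<Rightarrow> 'a \<Rightarrow> 'a) \<Rightarrow> (nat \<Rightarrow> 'g) \<Rightarrow> 'a set set \<Rightarrow> nat \<Rightarrow> 'a set set" where
  "join_cover X act s U n =
     {topspace X \<inter> (\<Inter>i\<in>{1..n}. preimg X act (s i) (W i)) | W. \<forall>i\<in>{1..n}. W i \<in> U}"

definition cover_number :: "'a topology \<Rightarrow> 'a set set \<Rightarrow> nat" where
  "cover_number X U = (LEAST k. \<exists>V\<subseteq>U. finite V \<and> card V = k \<and> topspace X \<subseteq> \<Union>V)"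

definition null_action :: "('g,'m) monoid_scheme \<Rightarrow> 'a topology \<Rightarrow> ('g \<Rightarrow> 'a \<Rightarrow> 'a) \<Rightarrow> bool" where
  "null_action G X act \<longleftrightarrow>
     (\<forall>s U. (\<forall>n. s n \<in> carrier G) \<and> finite U \<and> (\<forall>W\<in>U. openin X W) \<and> topspace X \<subseteq> \<Union>U \<longrightarrow>
        limsup (\<lambda>n. ereal (ln (real (cover_number X (join_cover X act s U n))) / real n)) = 0)"

definition indep_set :: "('g,'m) monoid_scheme \<Rightarrow> 'a topology \<Rightarrow> ('g \<Rightarrow> 'a \<Rightarrow> 'a) \<Rightarrow> 'a set \<Rightarrow> 'a set \<Rightarrow> 'g set \<Rightarrow> bool" where
  "indep_set G X act A1 A2 M \<longleftrightarrow> M \<subseteq> carrier G \<and>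
     (\<forall>F (\<omega>::'g \<Rightarrow> bool). F \<subseteq> M \<and> finite F \<and> F \<noteq> {} \<longrightarrow>
        (\<Inter>s\<in>F. preimg X act s (if \<omega> s then A1 else A2)) \<noteq> {})"

definition arb_large_indep :: "('g,'m) monoid_scheme \<Rightarrow> 'a topology \<Rightarrow> ('g \<Rightarrow> 'a \<Rightarrow> 'a) \<Rightarrow> 'a set \<Rightarrow> 'a set \<Rightarrow> bool" where
  "arb_large_indep G X act A1 A2 \<longleftrightarrow>
     (\<forall>k::nat. \<exists>M. finite M \<and> k \<le> card M \<and> indep_set G X act A1 A2 M)"

text \<open>(Y, actY, p) is the McMahon extension of (X, act) with respect to x1 and f, characterised
  (uniquely up to conjugacy) by the properties listed in the paper.\<close>
definition mcmahon_extension ::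
  "('g,'m) monoid_scheme \<Rightarrow> 'a topology \<Rightarrow> ('g \<Rightarrow> 'a \<Rightarrow> 'a) \<Rightarrow> 'a \<Rightarrow> ('a \<Rightarrow> real)
   \<Rightarrow> 'b topology \<Rightarrow> ('g \<Rightarrow> 'b \<Rightarrow> 'b) \<Rightarrow> ('b \<Rightarrow> 'a) \<Rightarrow> bool" where
  "mcmahon_extension G X act x1 f Y actY p \<longleftrightarrow>
     compact_space Y \<and> metrizable_space Y \<and> cont_action G Y actY \<and> minimal_action G Y actY \<and>
     continuous_map Y X p \<and> p ` topspace Y = topspace X \<and>
     (\<forall>s\<in>carrier G. \<forall>y\<in>topspace Y. p (actY s y) = act s (p y)) \<and>
     (\<forall>x\<in>topspace X - orbit_of G act x1. \<exists>!y. y \<in> topspace Y \<and> p y = x) \<and>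
     (\<forall>x\<in>topspace X \<inter> orbit_of G act x1. \<exists>y1 y2. y1 \<noteq> y2 \<and> {y\<in>topspace Y. p y = x} = {y1, y2}) \<and>
     (\<exists>ft. continuous_map Y euclideanreal ft \<and> ft ` topspace Y \<subseteq> {1, -1} \<and>
          (\<forall>y\<in>topspace Y. p y \<noteq> x1 \<longrightarrow> ft y = f (p y)))"

end

theory Submission
  imports Defs "HOL-Real_Asymp.Real_Asymp" "HOL-Library.Discrete_Functions"
begin

definition shatters :: "'x set set \<Rightarrow> 'x set \<Rightarrow> bool" where
  "shatters P F \<longleftrightarrow> (\<forall>F'\<subseteq>F. \<exists>\<pi>\<in>P. \<pi> \<inter> F = F')"

lemma card_eq_card_image_Diff_plus_card_pairs:
  fixes P :: "'x set set"
  assumes "finite P"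
  shows "card P = card ((\<lambda>\<pi>. \<pi> - {x}) ` P) + card {\<sigma>\<in>P. x \<notin> \<sigma> \<and> insert x \<sigma> \<in> P}"
proof -
  define A where "A = {\<pi>\<in>P. x \<notin> \<pi>}"
  define B where "B = {\<pi>\<in>P. x \<in> \<pi>}"
  have P_split: "P = A \<union> B" "A \<inter> B = {}"
    unfolding A_def B_def by auto
  have "finite A" "finite B"
    using assms by (simp_all add: A_def B_def)
  have "(\<lambda>\<pi>. \<pi> - {x}) ` A = (\<lambda>\<pi>. \<pi>) ` A"
    by (rule image_cong) (auto simp: A_def)
  then have image_P: "(\<lambda>\<pi>. \<pi> - {x}) ` P = A \<union> (\<lambda>\<pi>. \<pi> - {x}) ` B"
    unfolding P_split(1) image_Un by simp
  have pairs: "A \<inter> (\<lambda>\<pi>. \<pi> - {x}) ` B = {\<sigma>\<in>P. x \<notin> \<sigma> \<and> insert x \<sigma> \<in> P}"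
  proof (rule Set.set_eqI, rule iffI)
    fix \<sigma> assume "\<sigma> \<in> A \<inter> (\<lambda>\<pi>. \<pi> - {x}) ` B"
    then obtain \<pi> where "\<sigma> \<in> P" "x \<notin> \<sigma>" "\<pi> \<in> P" "x \<in> \<pi>" "\<sigma> = \<pi> - {x}"
      unfolding A_def B_def by blast
    then show "\<sigma> \<in> {\<sigma>\<in>P. x \<notin> \<sigma> \<and> insert x \<sigma> \<in> P}" by (simp add: insert_absorb)
  next
    fix \<sigma> assume "\<sigma> \<in> {\<sigma>\<in>P. x \<notin> \<sigma> \<and> insert x \<sigma> \<in> P}"
    then show "\<sigma> \<in> A \<inter> (\<lambda>\<pi>. \<pi> - {x}) ` B"
      unfolding A_def B_def by (auto intro!: image_eqI[of _ _ "insert x \<sigma>"])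
  qed
  have "inj_on (\<lambda>\<pi>. \<pi> - {x}) B"
    by (rule inj_onI) (simp add: B_def, metis insert_Diff)
  then show ?thesis
    using card_Un_Int[of A "(\<lambda>\<pi>. \<pi> - {x}) ` B"] card_Un_disjoint[of A B]
      \<open>finite A\<close> \<open>finite B\<close> P_split image_P pairs
    by (simp add: card_image)
qed

lemma shatters_if_shatters_image_Diff:
  assumes "shatters ((\<lambda>\<pi>. \<pi> - {x}) ` P) F" "x \<notin> F"
  shows "shatters P F"
  unfolding shatters_def
proof (intro allI impI)
  fix F' assume "F' \<subseteq> F"
  then obtain \<pi> where "\<pi> \<in> P" "(\<pi> - {x}) \<inter> F = F'"
    using assms(1) unfolding shatters_def by blast
  moreover have "(\<pi> - {x}) \<inter> F = \<pi> \<inter> F"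
    using assms(2) by blast
  ultimately show "\<exists>\<pi>\<in>P. \<pi> \<inter> F = F'" by auto
qed

lemma shatters_insert_if_shatters_pairs:
  assumes "shatters {\<sigma>\<in>P. x \<notin> \<sigma> \<and> insert x \<sigma> \<in> P} F" "x \<notin> F"
  shows "shatters P (insert x F)"
  unfolding shatters_def
proof (intro allI impI)
  fix F' assume "F' \<subseteq> insert x F"
  then have "F' - {x} \<subseteq> F" by blast
  then obtain \<sigma> where \<sigma>: "\<sigma> \<in> P" "x \<notin> \<sigma>" "insert x \<sigma> \<in> P" "\<sigma> \<inter> F = F' - {x}"
    using assms(1) unfolding shatters_def by blast
  show "\<exists>\<pi>\<in>P. \<pi> \<inter> insert x F = F'"
  proof (cases "x \<in> F'")
    case True
    then have "insert x \<sigma> \<inter> insert x F = F'" using \<sigma>(4) \<open>F' \<subseteq> insert x F\<close> by blast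
    then show ?thesis using \<sigma>(3) by blast
  next
    case False
    then have "\<sigma> \<inter> insert x F = F'" using \<sigma>(2,4) \<open>F' \<subseteq> insert x F\<close> by blast
    then show ?thesis using \<sigma>(1) by blast
  qed
qed

text \<open>Pajor's form of the Sauer--Shelah lemma.\<close>
lemma card_le_card_shattered:
  assumes "finite S" "P \<subseteq> Pow S"
  shows "card P \<le> card {F. F \<subseteq> S \<and> shatters P F}"
  using assms
proof (induction S arbitrary: P rule: finite_induct)
  case empty
  then consider "P = {}" | "P = {{}}" by auto
  then show ?case
  proof cases
    case 2
    then have "{F. F \<subseteq> {} \<and> shatters P F} = {{}}" by (auto simp: shatters_def)
    then show ?thesis using 2 by simp
  qed simp
next
  case (insert x S)
  define P0 where "P0 = (\<lambda>\<pi>. \<pi> - {x}) ` P"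
  define P1 where "P1 = {\<sigma>\<in>P. x \<notin> \<sigma> \<and> insert x \<sigma> \<in> P}"
  let ?sh = "\<lambda>Q. {F. F \<subseteq> S \<and> shatters Q F}"
  have "finite P"
    using insert.prems insert.hyps(1) finite_subset by blast
  then have "card P = card P0 + card P1"
    unfolding P0_def P1_def by (rule card_eq_card_image_Diff_plus_card_pairs)
  also have "\<dots> \<le> card (?sh P0) + card (?sh P1)"
  proof (intro add_mono insert.IH)
    show "P0 \<subseteq> Pow S" "P1 \<subseteq> Pow S"
      using insert.prems insert.hyps(2) unfolding P0_def P1_def by auto
  qed
  also have "\<dots> = card (?sh P0 \<union> insert x ` ?sh P1)"
  proof -
    have "inj_on (insert x) (?sh P1)"
    proof (rule inj_onI)
      fix F1 F2 assume "F1 \<in> ?sh P1" "F2 \<in> ?sh P1" "insert x F1 = insert x F2"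
      then show "F1 = F2"
        using insert.hyps(2) by (metis Diff_insert_absorb mem_Collect_eq subsetD)
    qed
    moreover have "?sh P0 \<inter> insert x ` ?sh P1 = {}"
      using insert.hyps(2) by blast
    ultimately show ?thesis
      using insert.hyps(1) by (simp add: card_Un_disjoint card_image)
  qed
  also have "\<dots> \<le> card {F. F \<subseteq> insert x S \<and> shatters P F}"
  proof (rule card_mono)
    show "finite {F. F \<subseteq> insert x S \<and> shatters P F}"
      using insert.hyps(1) by simp
    have "F \<in> {F. F \<subseteq> insert x S \<and> shatters P F}" if "F \<in> ?sh P0" for F
      using that insert.hyps(2) shatters_if_shatters_image_Diff[of x P F] unfolding P0_def by blast
    moreover have "insert x F \<in> {F. F \<subseteq> insert x S \<and> shatters P F}" if "F \<in> ?sh P1" for F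
      using that insert.hyps(2) shatters_insert_if_shatters_pairs[of P x F] unfolding P1_def by blast
    ultimately show "?sh P0 \<union> insert x ` ?sh P1 \<subseteq> {F. F \<subseteq> insert x S \<and> shatters P F}"
      by blast
  qed
  finally show ?case .
qed

lemma card_subsets_card_less:
  assumes "finite S"
  shows "card {F. F \<subseteq> S \<and> card F < d} \<le> (d + 1) * (card S + 1) ^ d"
proof -
  have "{F. F \<subseteq> S \<and> card F < d} \<subseteq> set ` {xs. set xs \<subseteq> S \<and> length xs \<le> d}"
  proof
    fix F assume F: "F \<in> {F. F \<subseteq> S \<and> card F < d}"
    then have "finite F" using assms finite_subset by blast
    then obtain xs where "set xs = F" "distinct xs"
      using finite_distinct_list by blast
    then show "F \<in> set ` {xs. set xs \<subseteq> S \<and> length xs \<le> d}"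
      using F distinct_card[of xs] by (intro image_eqI[of _ _ xs]) auto
  qed
  then have "card {F. F \<subseteq> S \<and> card F < d} \<le> card (set ` {xs. set xs \<subseteq> S \<and> length xs \<le> d})"
    by (intro card_mono finite_imageI finite_lists_length_le assms)
  also have "\<dots> \<le> card {xs. set xs \<subseteq> S \<and> length xs \<le> d}"
    by (intro card_image_le finite_lists_length_le assms)
  also have "\<dots> = (\<Sum>i\<le>d. card S ^ i)"
    by (rule card_lists_length_le[OF assms])
  also have "\<dots> \<le> (\<Sum>i\<le>d. (card S + 1) ^ d)"
  proof (rule sum_mono)
    fix i assume "i \<in> {..d}"
    then have "card S ^ i \<le> (card S + 1) ^ i" by (intro power_mono) auto
    also have "\<dots> \<le> (card S + 1) ^ d" using \<open>i \<in> {..d}\<close> by (intro power_increasing) auto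
    finally show "card S ^ i \<le> (card S + 1) ^ d" .
  qed
  finally show ?thesis by simp
qed

lemma join_coverI:
  "(\<And>i. i \<in> {1..n} \<Longrightarrow> W i \<in> U) \<Longrightarrow>
   topspace X \<inter> (\<Inter>i\<in>{1..n}. preimg X act (s i) (W i)) \<in> join_cover X act s U n"
  unfolding join_cover_def by blast

lemma join_coverE:
  assumes "v \<in> join_cover X act s U n"
  obtains W where "\<And>i. i \<in> {1..n} \<Longrightarrow> W i \<in> U"
    "v = topspace X \<inter> (\<Inter>i\<in>{1..n}. preimg X act (s i) (W i))"
  using assms unfolding join_cover_def by blast

lemma finite_join_cover:
  assumes "finite U"
  shows "finite (join_cover X act s U n)"
proof -
  let ?J = "\<lambda>W. topspace X \<inter> (\<Inter>i\<in>{1..n}. preimg X act (s i) (W i))"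
  have "join_cover X act s U n \<subseteq> ?J ` (PiE {1..n} (\<lambda>_. U))"
  proof
    fix v assume "v \<in> join_cover X act s U n"
    then obtain W where "\<And>i. i \<in> {1..n} \<Longrightarrow> W i \<in> U" "v = ?J W"
      by (elim join_coverE) blast
    then show "v \<in> ?J ` (PiE {1..n} (\<lambda>_. U))"
      by (intro image_eqI[of _ _ "restrict W {1..n}"]) auto
  qed
  moreover have "finite (?J ` (PiE {1..n} (\<lambda>_. U)))"
    using assms by (simp add: finite_PiE)
  ultimately show ?thesis
    by (rule finite_subset)
qed

lemma topspace_subset_Union_join_cover:
  assumes "topspace X \<subseteq> \<Union>U" "\<And>i x. x \<in> topspace X \<Longrightarrow> act (s i) x \<in> topspace X"
  shows "topspace X \<subseteq> \<Union>(join_cover X act s U n)"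
proof
  fix x assume x: "x \<in> topspace X"
  have "\<forall>i. \<exists>W. W \<in> U \<and> act (s i) x \<in> W"
    using assms x by blast
  then obtain W where W: "\<forall>i. W i \<in> U \<and> act (s i) x \<in> W i"
    by (rule choice[THEN exE])
  have "x \<in> topspace X \<inter> (\<Inter>i\<in>{1..n}. preimg X act (s i) (W i))"
    using x W unfolding preimg_def by auto
  moreover have "topspace X \<inter> (\<Inter>i\<in>{1..n}. preimg X act (s i) (W i)) \<in> join_cover X act s U n"
    using W by (intro join_coverI) blast
  ultimately show "x \<in> \<Union>(join_cover X act s U n)" by blast
qed

lemma cover_number_le_card:
  "V \<subseteq> U \<Longrightarrow> finite V \<Longrightarrow> topspace X \<subseteq> \<Union>V \<Longrightarrow> cover_number X U \<le> card V"
  unfolding cover_number_def by (rule Least_le) blast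

lemma cover_number_attained:
  assumes "finite U" "topspace X \<subseteq> \<Union>U"
  obtains V where "V \<subseteq> U" "finite V" "card V = cover_number X U" "topspace X \<subseteq> \<Union>V"
proof -
  let ?P = "\<lambda>k. \<exists>V\<subseteq>U. finite V \<and> card V = k \<and> topspace X \<subseteq> \<Union>V"
  have "?P (card U)"
    using assms by blast
  then have "?P (cover_number X U)"
    unfolding cover_number_def by (rule LeastI)
  then show ?thesis using that by blast
qed

lemma cover_number_le_card_refinement:
  assumes "finite \<A>" "topspace X \<subseteq> \<Union>\<A>" "\<And>A x. A \<in> \<A> \<Longrightarrow> x \<in> A \<Longrightarrow> \<exists>W\<in>U. A \<subseteq> W"
  shows "cover_number X U \<le> card \<A>"
proof -
  have "\<forall>A\<in>\<A> - {{}}. \<exists>W. W \<in> U \<and> A \<subseteq> W"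
    using assms(3) by blast
  then obtain g where g: "\<forall>A\<in>\<A> - {{}}. g A \<in> U \<and> A \<subseteq> g A"
    by (rule bchoice[THEN exE])
  have "cover_number X U \<le> card (g ` (\<A> - {{}}))"
  proof (rule cover_number_le_card)
    show "g ` (\<A> - {{}}) \<subseteq> U" "finite (g ` (\<A> - {{}}))"
      using g assms(1) by auto
    show "topspace X \<subseteq> \<Union>(g ` (\<A> - {{}}))"
      using g assms(2) by blast
  qed
  also have "\<dots> \<le> card (\<A> - {{}})"
    using assms(1) by (intro card_image_le) simp
  also have "\<dots> \<le> card \<A>"
    using assms(1) by (intro card_mono) auto
  finally show ?thesis .
qed

lemma card_image_le_cover_number:
  assumes "finite U" "topspace X \<subseteq> \<Union>U"
    and "\<And>W x y. W \<in> U \<Longrightarrow> x \<in> W \<inter> topspace X \<Longrightarrow> y \<in> W \<inter> topspace X \<Longrightarrow> \<phi> x = \<phi> y"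
  shows "card (\<phi> ` topspace X) \<le> cover_number X U"
proof -
  obtain V where V: "V \<subseteq> U" "finite V" "card V = cover_number X U" "topspace X \<subseteq> \<Union>V"
    using assms(1,2) by (rule cover_number_attained)
  let ?rep = "\<lambda>W. \<phi> (SOME x. x \<in> W \<inter> topspace X)"
  have "\<phi> ` topspace X \<subseteq> ?rep ` V"
  proof
    fix z assume "z \<in> \<phi> ` topspace X"
    then obtain x where x: "x \<in> topspace X" "z = \<phi> x" by blast
    then obtain W where W: "W \<in> V" "x \<in> W" using V(4) by blast
    have "(SOME x. x \<in> W \<inter> topspace X) \<in> W \<inter> topspace X"
      using W x by (intro someI) blast
    then have "\<phi> x = ?rep W"
      using V(1) W x by (intro assms(3)[of W]) auto
    then show "z \<in> ?rep ` V" using W x by auto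
  qed
  then have "card (\<phi> ` topspace X) \<le> card (?rep ` V)"
    using V(2) by (intro card_mono) auto
  also have "\<dots> \<le> card V"
    using V(2) by (rule card_image_le)
  finally show ?thesis using V(3) by simp
qed

lemma null_actionD:
  assumes "null_action G X act" "\<And>n. s n \<in> carrier G" "finite U"
    "\<And>W. W \<in> U \<Longrightarrow> openin X W" "topspace X \<subseteq> \<Union>U"
  shows "limsup (\<lambda>n. ereal (ln (real (cover_number X (join_cover X act s U n))) / real n)) = 0"
  using assms unfolding null_action_def by blast

lemma limsup_ln_over_n_nonneg:
  fixes N :: "nat \<Rightarrow> nat"
  shows "0 \<le> limsup (\<lambda>n. ereal (ln (real (N n)) / real n))"
proof (rule le_Limsup)
  show "\<forall>\<^sub>F n in sequentially. 0 \<le> ereal (ln (real (N n)) / real n)"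
  proof (intro always_eventually allI)
    fix n
    show "0 \<le> ereal (ln (real (N n)) / real n)"
      by (cases "N n = 0") simp_all
  qed
qed simp

lemma limsup_ln_over_n_ge_if_doubly_exponential:
  fixes N :: "nat \<Rightarrow> nat"
  assumes "\<And>j. 2 ^ 2 ^ j \<le> N (2 ^ Suc j)"
  shows "ereal (ln 2 / 2) \<le> limsup (\<lambda>n. ereal (ln (real (N n)) / real n))"
proof -
  define r where "r j = (2::nat) ^ Suc j" for j
  have "ln 2 / 2 \<le> ln (real (N (r j))) / real (r j)" for j
  proof -
    have "(2::real) ^ 2 ^ j \<le> real (N (r j))"
      using assms[of j] unfolding r_def by (metis of_nat_le_iff of_nat_numeral of_nat_power)
    then have "2 ^ j * ln 2 \<le> ln (real (N (r j)))"
      using ln_mono[of "2 ^ 2 ^ j" "real (N (r j))"] by (simp add: ln_realpow)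
    then show ?thesis by (simp add: r_def field_simps)
  qed
  then have "ereal (ln 2 / 2) \<le> limsup ((\<lambda>n. ereal (ln (real (N n)) / real n)) \<circ> r)"
    by (intro le_Limsup) auto
  also have "\<dots> \<le> limsup (\<lambda>n. ereal (ln (real (N n)) / real n))"
    by (rule limsup_subseq_mono) (simp add: r_def strict_mono_def)
  finally show ?thesis .
qed

lemma ln_over_n_le_if_poly_bounded:
  fixes NX NY C d n :: nat
  assumes "NY \<le> NX * C * (n + 1) ^ d" "1 \<le> C"
  shows "ln (real NY) / real n \<le> ln (real NX) / real n + (ln (real C) + d * ln (real n + 1)) / real n"
proof (cases "NY = 0")
  case False
  then have "NX \<noteq> 0"
    using assms(1) by (metis le_zero_eq mult_0)
  then have pos: "0 < real NY" "0 < real NX" "0 < real C"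
    using False assms(2) by auto
  have "real NY \<le> real NX * real C * (real n + 1) ^ d"
    using assms(1) by (metis of_nat_1 of_nat_add of_nat_le_iff of_nat_mult of_nat_power)
  then have "ln (real NY) \<le> ln (real NX * real C * (real n + 1) ^ d)"
    using pos by (intro ln_mono) auto
  also have "\<dots> = ln (real NX) + ln (real C) + d * ln (real n + 1)"
    using pos by (simp add: ln_mult ln_realpow)
  finally show ?thesis
    by (simp add: divide_right_mono add_divide_distrib[symmetric])
next
  case True
  have "0 \<le> ln (real NX)" by (cases "NX = 0") simp_all
  moreover have "0 \<le> ln (real C)" using assms(2) by simp
  moreover have "0 \<le> ln (real n + 1)" by simp
  ultimately show ?thesis
    using True by (simp add: add_divide_distrib[symmetric])
qed

lemma limsup_ln_over_n_eq_0_if_poly_bounded: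
  fixes NX NY :: "nat \<Rightarrow> nat" and C d :: nat
  assumes "\<And>n. NY n \<le> NX n * C * (n + 1) ^ d" "1 \<le> C"
    and "limsup (\<lambda>n. ereal (ln (real (NX n)) / real n)) = 0"
  shows "limsup (\<lambda>n. ereal (ln (real (NY n)) / real n)) = 0"
proof (rule antisym)
  define h where "h n = (ln (real C) + d * ln (real n + 1)) / real n" for n
  have "h \<longlonglongrightarrow> 0"
    unfolding h_def by real_asymp
  then have limsup_h: "limsup (\<lambda>n. ereal (h n)) = 0"
    using lim_imp_Limsup[OF trivial_limit_sequentially tendsto_ereal] by fastforce
  have "limsup (\<lambda>n. ereal (ln (real (NY n)) / real n))
        \<le> limsup (\<lambda>n. ereal (ln (real (NX n)) / real n) + ereal (h n))"
    using ln_over_n_le_if_poly_bounded[OF assms(1,2)]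
    by (intro Limsup_mono always_eventually) (simp add: h_def)
  also have "\<dots> \<le> limsup (\<lambda>n. ereal (ln (real (NX n)) / real n)) + limsup (\<lambda>n. ereal (h n))"
    by (rule ereal_limsup_add_mono)
  finally show "limsup (\<lambda>n. ereal (ln (real (NY n)) / real n)) \<le> 0"
    using assms(3) limsup_h by simp
qed (rule limsup_ln_over_n_nonneg)

lemma limsup_ln_over_n_eq_0_if_le:
  fixes N N' :: "nat \<Rightarrow> nat"
  assumes "\<And>n. N n \<le> N' n" "limsup (\<lambda>n. ereal (ln (real (N' n)) / real n)) = 0"
  shows "limsup (\<lambda>n. ereal (ln (real (N n)) / real n)) = 0"
  by (rule limsup_ln_over_n_eq_0_if_poly_bounded[where C = 1 and d = 0, OF _ _ assms(2)])
    (simp_all add: assms(1))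

lemma exists_seq_enumerating_blocks:
  fixes M :: "nat \<Rightarrow> 'x set"
  assumes "\<And>j. finite (M j)" "\<And>j. card (M j) \<le> 2 ^ j" "\<And>j. M j \<subseteq> A" "a \<in> A"
  obtains s :: "nat \<Rightarrow> 'x" where "\<And>i. s i \<in> A" "\<And>j. M j \<subseteq> s ` {1..2 ^ Suc j}"
proof -
  have "\<forall>j. \<exists>e. bij_betw e {0..<card (M j)} (M j)"
    using assms(1) ex_bij_betw_nat_finite by blast
  then obtain e where e: "\<forall>j. bij_betw (e j) {0..<card (M j)} (M j)"
    by (rule choice[THEN exE])
  define s where "s i = (if 0 < i \<and> i - 2 ^ floor_log i < card (M (floor_log i))
    then e (floor_log i) (i - 2 ^ floor_log i) else a)" for i
  show thesis
  proof (rule that)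
    fix i
    have "e j k \<in> A" if "k < card (M j)" for j k
      using bij_betw_apply[OF e[rule_format, of j]] that assms(3)[of j] by auto
    then show "s i \<in> A"
      using assms(4) unfolding s_def by simp
  next
    fix j
    show "M j \<subseteq> s ` {1..2 ^ Suc j}"
    proof
      fix g assume "g \<in> M j"
      then have "g \<in> e j ` {0..<card (M j)}"
        using e by (simp add: bij_betw_def)
      then obtain k where k: "k < card (M j)" "g = e j k"
        by auto
      then have "k < 2 ^ j"
        using assms(2)[of j] by linarith
      then have "floor_log (2 ^ j + k) = j"
        by (intro floor_log_eqI) auto
      then have "s (2 ^ j + k) = g"
        using k unfolding s_def by simp
      moreover have "2 ^ j + k \<in> {1..2 ^ Suc j}"
        using \<open>k < 2 ^ j\<close> by simp
      ultimately show "g \<in> s ` {1..2 ^ Suc j}"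
        by (metis image_eqI)
    qed
  qed
qed


lemma compact_space_finite_subcover_image:
  assumes "compact_space X" "\<And>x. x \<in> topspace X \<Longrightarrow> openin X (Q x)" "\<And>x. x \<in> topspace X \<Longrightarrow> x \<in> Q x"
  obtains K where "K \<subseteq> topspace X" "finite K" "topspace X \<subseteq> \<Union>(Q ` K)"
proof -
  have "compactin X (topspace X)"
    using assms(1) unfolding compact_space_def .
  moreover have "topspace X \<subseteq> \<Union>(Q ` topspace X)"
    using assms(3) by blast
  ultimately obtain \<F> where \<F>: "finite \<F>" "\<F> \<subseteq> Q ` topspace X" "topspace X \<subseteq> \<Union>\<F>"
    using assms(2) compactinD[of X "topspace X" "Q ` topspace X"] by blast
  obtain K where "K \<subseteq> topspace X" "finite K" "\<F> = Q ` K"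
    using finite_subset_image[OF \<F>(1,2)] by blast
  then show thesis
    using \<F>(3) by (intro that) simp_all
qed


lemma indep_set_subset:
  assumes "indep_set G X act A1 A2 M" "M' \<subseteq> M"
  shows "indep_set G X act A1 A2 M'"
  using assms unfolding indep_set_def by (meson order_trans)

lemma cont_action_in_topspace:
  "cont_action G X act \<Longrightarrow> s \<in> carrier G \<Longrightarrow> x \<in> topspace X \<Longrightarrow> act s x \<in> topspace X"
  unfolding cont_action_def by (meson continuous_map_image_subset_topspace image_subset_iff)

lemma null_action_factor:
  fixes G :: "('g,'m) monoid_scheme" and X :: "'a topology" and Y :: "'b topology"
  assumes act_Y: "cont_action G Y actY" and act_X: "cont_action G X act"
    and p: "continuous_map Y X p" "p ` topspace Y = topspace X"
    and equivariant: "\<And>s y. s \<in> carrier G \<Longrightarrow> y \<in> topspace Y \<Longrightarrow> p (actY s y) = act s (p y)"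
    and null_Y: "null_action G Y actY"
  shows "null_action G X act"
  unfolding null_action_def
proof (intro allI impI, elim conjE)
  fix s :: "nat \<Rightarrow> 'g" and U :: "'a set set"
  assume s: "\<forall>n. s n \<in> carrier G" and U: "finite U" "\<forall>W\<in>U. openin X W" "topspace X \<subseteq> \<Union>U"
  define pre where "pre u = {y \<in> topspace Y. p y \<in> u}" for u
  have finite_pre: "finite (pre ` U)"
    using U(1) by simp
  have cover_pre: "topspace Y \<subseteq> \<Union>(pre ` U)"
    using U(3) p(2) unfolding pre_def by blast
  have limsup_Y: "limsup (\<lambda>n. ereal (ln (real (cover_number Y (join_cover Y actY s (pre ` U) n))) / real n)) = 0"
  proof (rule null_actionD[OF null_Y _ finite_pre _ cover_pre])
    show "openin Y W" if "W \<in> pre ` U" for W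
      using that U(2) unfolding pre_def by (auto intro: openin_continuous_map_preimage[OF p(1)])
  qed (use s in blast)
  have "cover_number X (join_cover X act s U n) \<le> cover_number Y (join_cover Y actY s (pre ` U) n)" for n
  proof -
    have "topspace Y \<subseteq> \<Union>(join_cover Y actY s (pre ` U) n)"
      using cover_pre cont_action_in_topspace[OF act_Y] s by (intro topspace_subset_Union_join_cover) auto
    then obtain V where V: "V \<subseteq> join_cover Y actY s (pre ` U) n" "finite V"
        "card V = cover_number Y (join_cover Y actY s (pre ` U) n)" "topspace Y \<subseteq> \<Union>V"
      by (rule cover_number_attained[OF finite_join_cover[OF finite_pre]])
    have image_in_join: "\<exists>c\<in>join_cover X act s U n. p ` v \<subseteq> c" if "v \<in> V" for v
    proof -
      have "v \<in> join_cover Y actY s (pre ` U) n"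
        using that V(1) by blast
      then obtain W where W: "\<And>i. i \<in> {1..n} \<Longrightarrow> W i \<in> pre ` U"
          "v = topspace Y \<inter> (\<Inter>i\<in>{1..n}. preimg Y actY (s i) (W i))"
        by (elim join_coverE) blast
      then have "\<forall>i\<in>{1..n}. \<exists>u. u \<in> U \<and> W i = pre u" by blast
      then obtain u where u: "\<forall>i\<in>{1..n}. u i \<in> U \<and> W i = pre (u i)"
        by (rule bchoice[THEN exE])
      have "p y \<in> topspace X \<inter> (\<Inter>i\<in>{1..n}. preimg X act (s i) (u i))" if "y \<in> v" for y
      proof -
        have y: "y \<in> topspace Y" "\<And>i. i \<in> {1..n} \<Longrightarrow> actY (s i) y \<in> pre (u i)"
          using that u W(2) unfolding preimg_def by auto
        have "act (s i) (p y) \<in> u i" if "i \<in> {1..n}" for i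
        proof -
          have "p (actY (s i) y) \<in> u i"
            using y(2)[OF that] unfolding pre_def by blast
          then show ?thesis
            using equivariant[of "s i" y] s y(1) by simp
        qed
        then show ?thesis
          using y(1) p(2) unfolding preimg_def by auto
      qed
      moreover have "topspace X \<inter> (\<Inter>i\<in>{1..n}. preimg X act (s i) (u i)) \<in> join_cover X act s U n"
        using u by (intro join_coverI) blast
      ultimately show ?thesis by blast
    qed
    have "cover_number X (join_cover X act s U n) \<le> card ((`) p ` V)"
    proof (rule cover_number_le_card_refinement)
      show "finite ((`) p ` V)" using V(2) by simp
      show "topspace X \<subseteq> \<Union>((`) p ` V)"
      proof
        fix x assume "x \<in> topspace X"
        then obtain y where "y \<in> topspace Y" "x = p y"
          using p(2) by auto
        moreover obtain v where "v \<in> V" "y \<in> v"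
          using V(4) \<open>y \<in> topspace Y\<close> by blast
        ultimately show "x \<in> \<Union>((`) p ` V)" by blast
      qed
      show "\<exists>W\<in>join_cover X act s U n. A \<subseteq> W" if "A \<in> (`) p ` V" for A
        using that image_in_join by blast
    qed
    also have "\<dots> \<le> card V"
      using V(2) by (rule card_image_le)
    finally show ?thesis using V(3) by simp
  qed
  then show "limsup (\<lambda>n. ereal (ln (real (cover_number X (join_cover X act s U n))) / real n)) = 0"
    using limsup_Y by (rule limsup_ln_over_n_eq_0_if_le)
qed

locale continuous_action = group G for G :: "('g,'m) monoid_scheme" (structure) +
  fixes X :: "'a topology" and act :: "'g \<Rightarrow> 'a \<Rightarrow> 'a"
  assumes cont_action: "cont_action G X act"
begin

lemma act_in_topspace: "s \<in> carrier G \<Longrightarrow> x \<in> topspace X \<Longrightarrow> act s x \<in> topspace X"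
  using cont_action by (rule cont_action_in_topspace)

lemma continuous_map_act: "s \<in> carrier G \<Longrightarrow> continuous_map X X (act s)"
  using cont_action unfolding cont_action_def by blast

lemma act_one: "x \<in> topspace X \<Longrightarrow> act \<one> x = x"
  using cont_action unfolding cont_action_def by blast

lemma act_mult:
  "s \<in> carrier G \<Longrightarrow> t \<in> carrier G \<Longrightarrow> x \<in> topspace X \<Longrightarrow> act (s \<otimes> t) x = act s (act t x)"
  using cont_action unfolding cont_action_def by blast

lemma act_inv_act: "s \<in> carrier G \<Longrightarrow> x \<in> topspace X \<Longrightarrow> act (inv s) (act s x) = x"
  using act_mult[of "inv s" s x] by (simp add: act_one)

lemma in_orbit_of_self: "x \<in> topspace X \<Longrightarrow> x \<in> orbit_of G act x"
  unfolding orbit_of_def using act_one[of x] by (intro image_eqI[of _ _ \<one>]) simp_all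

lemma act_in_orbit_of_iff:
  assumes "s \<in> carrier G" "x \<in> topspace X" "x0 \<in> topspace X"
  shows "act s x \<in> orbit_of G act x0 \<longleftrightarrow> x \<in> orbit_of G act x0"
proof
  assume "act s x \<in> orbit_of G act x0"
  then obtain g where g: "g \<in> carrier G" "act s x = act g x0"
    unfolding orbit_of_def by blast
  then have "x = act (inv s \<otimes> g) x0"
    using assms act_inv_act[of s x] by (simp add: act_mult)
  then show "x \<in> orbit_of G act x0"
    unfolding orbit_of_def using g assms by blast
next
  assume "x \<in> orbit_of G act x0"
  then obtain g where g: "g \<in> carrier G" "x = act g x0"
    unfolding orbit_of_def by blast
  then have "act s x = act (s \<otimes> g) x0"
    using assms by (simp add: act_mult)
  then show "act s x \<in> orbit_of G act x0"
    unfolding orbit_of_def using g assms by blast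
qed

lemma exists_not_in_orbit_of:
  assumes "\<exists>x\<in>topspace X. \<exists>y\<in>topspace X. y \<notin> orbit_of G act x" "x0 \<in> topspace X"
  shows "\<exists>x\<in>topspace X. x \<notin> orbit_of G act x0"
proof (rule ccontr)
  assume "\<not> ?thesis"
  then have all: "x \<in> orbit_of G act x0" if "x \<in> topspace X" for x
    using that by blast
  obtain x y where xy: "x \<in> topspace X" "y \<in> topspace X" "y \<notin> orbit_of G act x"
    using assms(1) by blast
  obtain g h where gh: "g \<in> carrier G" "x = act g x0" "h \<in> carrier G" "y = act h x0"
    using all[OF xy(1)] all[OF xy(2)] unfolding orbit_of_def by blast
  then have "act (h \<otimes> inv g) x = act ((h \<otimes> inv g) \<otimes> g) x0"
    using assms(2) by (simp add: act_mult)
  also have "\<dots> = y"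
    using gh by (simp add: m_assoc)
  finally show False
    using xy(3) gh unfolding orbit_of_def by (metis image_eqI inv_closed m_closed)
qed

end

locale mcmahon_ext = X: continuous_action G X act
  for G :: "('g,'m) monoid_scheme" (structure) and X :: "'a topology" and act +
  fixes x1 :: 'a and f :: "'a \<Rightarrow> real"
    and Y :: "'b topology" and actY :: "'g \<Rightarrow> 'b \<Rightarrow> 'b" and p :: "'b \<Rightarrow> 'a"
    and ft :: "'b \<Rightarrow> real"
  assumes compact_X: "compact_space X" and Hausdorff_X: "Hausdorff_space X"
    and not_transitive: "\<exists>x\<in>topspace X. \<exists>y\<in>topspace X. y \<notin> orbit_of G act x"
    and x1_in: "x1 \<in> topspace X"
    and f_values: "f ` (topspace X - {x1}) \<subseteq> {1, -1}"
    and f_not_extendable: "\<not> (\<exists>g. continuous_map X euclideanreal g \<and> g ` topspace X \<subseteq> {1, -1} \<and>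
                (\<forall>x\<in>topspace X - {x1}. g x = f x))"
    and extension: "mcmahon_extension G X act x1 f Y actY p"
    and ft_continuous: "continuous_map Y euclideanreal ft"
    and ft_values: "ft ` topspace Y \<subseteq> {1, -1}"
    and ft_lifts_f: "\<And>y. y \<in> topspace Y \<Longrightarrow> p y \<noteq> x1 \<Longrightarrow> ft y = f (p y)"
begin

sublocale Y: continuous_action G Y actY
  by unfold_locales (use extension in \<open>simp add: mcmahon_extension_def\<close>)

lemma compact_Y: "compact_space Y"
  using extension by (simp add: mcmahon_extension_def)

lemma minimal_Y: "minimal_action G Y actY"
  using extension by (simp add: mcmahon_extension_def)

lemma continuous_map_p: "continuous_map Y X p"
  using extension by (simp add: mcmahon_extension_def)

lemma p_image: "p ` topspace Y = topspace X"
  using extension by (simp add: mcmahon_extension_def)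

lemma p_in_topspace: "y \<in> topspace Y \<Longrightarrow> p y \<in> topspace X"
  using p_image by blast

lemma p_act: "s \<in> carrier G \<Longrightarrow> y \<in> topspace Y \<Longrightarrow> p (actY s y) = act s (p y)"
  using extension by (simp add: mcmahon_extension_def)

lemma fibre_singleton:
  "x \<in> topspace X \<Longrightarrow> x \<notin> orbit_of G act x1 \<Longrightarrow> \<exists>!y. y \<in> topspace Y \<and> p y = x"
  using extension by (simp add: mcmahon_extension_def)

lemma fibre_x1_doubleton: "\<exists>y1 y2. y1 \<noteq> y2 \<and> {y \<in> topspace Y. p y = x1} = {y1, y2}"
  using extension x1_in X.in_orbit_of_self by (simp add: mcmahon_extension_def)

lemma ft_cases: "y \<in> topspace Y \<Longrightarrow> ft y = 1 \<or> ft y = -1"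
  using ft_values by blast

definition pattern :: "'g set \<Rightarrow> 'b \<Rightarrow> 'g set" where
  "pattern T y = {t \<in> T. ft (actY t y) = 1}"

definition cell :: "'a set \<Rightarrow> 'g set \<Rightarrow> 'b \<Rightarrow> 'b set" where
  "cell A T y = {z \<in> topspace Y. p z \<in> A \<and> pattern T z = pattern T y}"

lemma pattern_subset: "pattern T y \<subseteq> T"
  unfolding pattern_def by blast

lemma pattern_eq_iff:
  assumes "y \<in> topspace Y" "z \<in> topspace Y" "T \<subseteq> carrier G"
  shows "pattern T z = pattern T y \<longleftrightarrow> (\<forall>t\<in>T. ft (actY t z) = ft (actY t y))"
proof -
  have "(ft (actY t z) = 1 \<longleftrightarrow> ft (actY t y) = 1) \<longleftrightarrow> ft (actY t z) = ft (actY t y)" if "t \<in> T" for t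
    using ft_cases[OF Y.act_in_topspace[OF _ assms(1)], of t] ft_cases[OF Y.act_in_topspace[OF _ assms(2)], of t]
      that assms(3) by auto
  moreover have "pattern T z = pattern T y \<longleftrightarrow> (\<forall>t\<in>T. ft (actY t z) = 1 \<longleftrightarrow> ft (actY t y) = 1)"
    unfolding pattern_def by blast
  ultimately show ?thesis by blast
qed

lemma openin_sign_level:
  assumes "t \<in> carrier G"
  shows "openin Y {z \<in> topspace Y. ft (actY t z) = 1 \<longleftrightarrow> b}"
proof -
  have cont: "continuous_map Y euclideanreal (ft \<circ> actY t)"
    using Y.continuous_map_act[OF assms] ft_continuous by (rule continuous_map_compose)
  have "openin Y {z \<in> topspace Y. (ft \<circ> actY t) z \<in> (if b then {0<..} else {..<0})}"
    by (rule openin_continuous_map_preimage[OF cont]) (cases b; simp)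
  moreover have "{z \<in> topspace Y. (ft \<circ> actY t) z \<in> (if b then {0<..} else {..<0})}
      = {z \<in> topspace Y. ft (actY t z) = 1 \<longleftrightarrow> b}"
  proof (rule Collect_cong)
    fix z
    show "z \<in> topspace Y \<and> (ft \<circ> actY t) z \<in> (if b then {0<..} else {..<0})
        \<longleftrightarrow> z \<in> topspace Y \<and> (ft (actY t z) = 1 \<longleftrightarrow> b)"
      using ft_cases[OF Y.act_in_topspace[OF assms, of z]] by (cases b) auto
  qed
  ultimately show ?thesis
    by simp
qed

lemma openin_pattern_class:
  assumes "finite T" "T \<subseteq> carrier G"
  shows "openin Y {z \<in> topspace Y. pattern T z = \<pi>}"
proof (cases "\<pi> \<subseteq> T")
  case True
  have "pattern T z = \<pi> \<longleftrightarrow> (\<forall>t\<in>T. ft (actY t z) = 1 \<longleftrightarrow> t \<in> \<pi>)" for z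
    using True unfolding pattern_def by blast
  then have "{z \<in> topspace Y. pattern T z = \<pi>} =
      topspace Y \<inter> \<Inter>((\<lambda>t. {z \<in> topspace Y. ft (actY t z) = 1 \<longleftrightarrow> t \<in> \<pi>}) ` T)"
    by auto
  moreover have "openin Y (topspace Y \<inter> \<Inter>((\<lambda>t. {z \<in> topspace Y. ft (actY t z) = 1 \<longleftrightarrow> t \<in> \<pi>}) ` T))"
    using assms openin_sign_level by (intro openin_Int_Inter) auto
  ultimately show ?thesis by simp
next
  case False
  then have "{z \<in> topspace Y. pattern T z = \<pi>} = {}"
    using pattern_subset by blast
  then show ?thesis by (metis openin_empty)
qed

lemma openin_cell:
  assumes "openin X A" "finite T" "T \<subseteq> carrier G"
  shows "openin Y (cell A T y)"
proof -
  have "cell A T y = {z \<in> topspace Y. p z \<in> A} \<inter> {z \<in> topspace Y. pattern T z = pattern T y}"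
    unfolding cell_def by auto
  then show ?thesis
    using openin_Int[OF openin_continuous_map_preimage[OF continuous_map_p assms(1)]
        openin_pattern_class[OF assms(2,3)]] by simp
qed

lemma in_cell_self: "y \<in> topspace Y \<Longrightarrow> p y \<in> A \<Longrightarrow> y \<in> cell A T y"
  unfolding cell_def by simp

lemma cell_subset_topspace: "cell A T y \<subseteq> topspace Y"
  unfolding cell_def by blast

lemma cell_subset_preimage: "cell A T y \<subseteq> {z \<in> topspace Y. p z \<in> A}"
  unfolding cell_def by (rule subsetI) simp

lemma pattern_eq_if_in_cell: "z \<in> cell A T y \<Longrightarrow> pattern T z = pattern T y"
  unfolding cell_def by simp

lemma cell_cong: "pattern T w = pattern T y \<Longrightarrow> cell A T w = cell A T y"
  unfolding cell_def by simp

lemma pattern_restrict: "T' \<subseteq> T \<Longrightarrow> pattern T' y = pattern T y \<inter> T'"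
  unfolding pattern_def by blast

lemma cell_mono:
  assumes "A \<subseteq> A'" "T' \<subseteq> T"
  shows "cell A T y \<subseteq> cell A' T' y"
proof
  fix z assume "z \<in> cell A T y"
  then have "z \<in> topspace Y" "p z \<in> A" "pattern T z = pattern T y"
    unfolding cell_def by simp_all
  then show "z \<in> cell A' T' y"
    using assms pattern_restrict[OF assms(2)] unfolding cell_def by auto
qed

lemma pattern_act_eq:
  assumes "s \<in> carrier G" "T \<subseteq> carrier G" "(\<lambda>t. t \<otimes> s) ` T \<subseteq> S"
    and "y \<in> topspace Y" "z \<in> topspace Y" "pattern S z = pattern S y"
  shows "pattern T (actY s z) = pattern T (actY s y)"
proof -
  have shift: "t \<in> pattern T (actY s w) \<longleftrightarrow> t \<in> T \<and> t \<otimes> s \<in> pattern S w" if "w \<in> topspace Y" for t w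
  proof (cases "t \<in> T")
    case True
    then have "actY t (actY s w) = actY (t \<otimes> s) w" "t \<otimes> s \<in> S"
      using assms(1-3) that Y.act_mult by auto
    then show ?thesis
      unfolding pattern_def by simp
  qed (simp add: pattern_def)
  show ?thesis
  proof (rule Set.set_eqI)
    fix t
    show "t \<in> pattern T (actY s z) \<longleftrightarrow> t \<in> pattern T (actY s y)"
      using shift[OF assms(4)] shift[OF assms(5)] assms(6) by simp
  qed
qed

text \<open>Otherwise ft would descend, through the quotient map p, to a continuous extension of f.\<close>
lemma ft_differs_on_fibre_x1:
  assumes "y \<in> topspace Y" "z \<in> topspace Y" "p y = x1" "p z = x1" "y \<noteq> z"
  shows "ft y \<noteq> ft z"
proof
  assume eq: "ft y = ft z"
  obtain y1 y2 where "{w \<in> topspace Y. p w = x1} = {y1, y2}"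
    using fibre_x1_doubleton by blast
  then have fibre_iff: "w \<in> topspace Y \<and> p w = x1 \<longleftrightarrow> w = y1 \<or> w = y2" for w
    by (simp add: set_eq_iff)
  have ft_fibre: "ft w = ft y" if "w \<in> topspace Y" "p w = x1" for w
  proof -
    have "w = y \<or> w = z"
      using fibre_iff[of w] fibre_iff[of y] fibre_iff[of z] that assms by auto
    then show ?thesis using eq by auto
  qed
  define g where "g x = (if x = x1 then ft y else f x)" for x
  have "continuous_map Y euclideanreal (g \<circ> p)"
  proof (rule continuous_map_eq[OF ft_continuous])
    fix w assume "w \<in> topspace Y"
    then show "ft w = (g \<circ> p) w"
      using ft_fibre ft_lifts_f by (cases "p w = x1") (simp_all add: g_def)
  qed
  then have "continuous_map X euclideanreal g"
    by (rule continuous_compose_quotient_map[OF continuous_imp_quotient_map[OF continuous_map_p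
          compact_Y Hausdorff_X p_image]])
  moreover have "g ` topspace X \<subseteq> {1, -1}"
    using f_values ft_cases[OF assms(1)] unfolding g_def by auto
  moreover have "\<forall>x\<in>topspace X - {x1}. g x = f x"
    by (simp add: g_def)
  ultimately show False
    using f_not_extendable by blast
qed

lemma fibre_separated_by_sign:
  assumes "y \<in> topspace Y" "z \<in> topspace Y" "p y = p z" "y \<noteq> z"
  shows "\<exists>t\<in>carrier G. ft (actY t y) \<noteq> ft (actY t z)"
proof -
  have "p y \<in> orbit_of G act x1"
  proof (rule ccontr)
    assume "p y \<notin> orbit_of G act x1"
    then have "\<exists>!w. w \<in> topspace Y \<and> p w = p y"
      using fibre_singleton p_in_topspace[OF assms(1)] by blast
    then obtain w where "\<And>w'. w' \<in> topspace Y \<and> p w' = p y \<Longrightarrow> w' = w"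
      by (elim ex1E) blast
    then have "y = w" "z = w"
      using assms(1-3) by auto
    then show False
      using assms(4) by simp
  qed
  then obtain g where g: "g \<in> carrier G" "p y = act g x1"
    unfolding orbit_of_def by blast
  have "p (actY (inv g) y) = x1" "p (actY (inv g) z) = x1"
    using g assms(1-3) p_act X.act_inv_act x1_in by simp_all
  moreover have "actY (inv g) y \<noteq> actY (inv g) z"
  proof
    have cancel: "actY g (actY (inv g) w) = w" if "w \<in> topspace Y" for w
      using Y.act_inv_act[of "inv g" w] that g(1) by simp
    assume "actY (inv g) y = actY (inv g) z"
    then have "actY g (actY (inv g) y) = actY g (actY (inv g) z)" by simp
    then show False
      using cancel assms(1,2,4) by simp
  qed
  ultimately have "ft (actY (inv g) y) \<noteq> ft (actY (inv g) z)"
    using g(1) assms(1,2) by (intro ft_differs_on_fibre_x1) (simp_all add: Y.act_in_topspace)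
  then show ?thesis
    using g(1) by blast
qed

lemma exists_off_orbit_in_open:
  assumes "openin Y W" "W \<noteq> {}"
  shows "\<exists>z\<in>W. p z \<notin> orbit_of G act x1"
proof -
  define D where "D = {z \<in> topspace Y. p z \<notin> orbit_of G act x1}"
  have "D \<subseteq> topspace Y"
    by (simp add: D_def)
  obtain x where x: "x \<in> topspace X" "x \<notin> orbit_of G act x1"
    using X.exists_not_in_orbit_of[OF not_transitive x1_in] by blast
  then obtain y where "y \<in> topspace Y" "x = p y"
    using p_image by (metis imageE)
  then have "y \<in> Y closure_of D"
    using x(2) closure_of_subset[OF \<open>D \<subseteq> topspace Y\<close>] unfolding D_def by blast
  moreover have "actY s z \<in> Y closure_of D" if "s \<in> carrier G" "z \<in> Y closure_of D" for s z
  proof -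
    have "actY s z' \<in> D" if "z' \<in> D" for z'
    proof -
      have "z' \<in> topspace Y" "p z' \<notin> orbit_of G act x1"
        using that unfolding D_def by simp_all
      then show ?thesis
        using \<open>s \<in> carrier G\<close> X.act_in_orbit_of_iff[OF \<open>s \<in> carrier G\<close> p_in_topspace x1_in]
          Y.act_in_topspace p_act unfolding D_def by simp
    qed
    then have "actY s ` D \<subseteq> D" by blast
    have "actY s ` (Y closure_of D) \<subseteq> Y closure_of (actY s ` D)"
      by (rule continuous_map_image_closure_subset[OF Y.continuous_map_act[OF that(1)]])
    also have "\<dots> \<subseteq> Y closure_of D"
      by (rule closure_of_mono) fact
    finally show ?thesis
      using that(2) by blast
  qed
  ultimately have "Y closure_of D = topspace Y"
    using minimal_Y closedin_closure_of[of Y D] unfolding minimal_action_def by blast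
  moreover have "W \<inter> topspace Y \<noteq> {}"
    using assms openin_subset by (metis inf.absorb1)
  ultimately have "W \<inter> D \<noteq> {}"
    using openin_Int_closure_of_eq_empty[OF assms(1)] by metis
  then show ?thesis
    unfolding D_def by blast
qed

definition X_plus :: "'a set" where
  "X_plus = {x \<in> topspace X - {x1}. f x = 1}"

definition X_minus :: "'a set" where
  "X_minus = {x \<in> topspace X - {x1}. f x = -1}"

definition sign_cover :: "'b set set" where
  "sign_cover = {{y \<in> topspace Y. ft y = 1}, {y \<in> topspace Y. ft y = -1}}"

lemma sign_cover_open:
  assumes "W \<in> sign_cover"
  shows "openin Y W"
proof -
  have "{y \<in> topspace Y. ft y = 1} = {z \<in> topspace Y. ft (actY \<one> z) = 1 \<longleftrightarrow> True}"
    "{y \<in> topspace Y. ft y = -1} = {z \<in> topspace Y. ft (actY \<one> z) = 1 \<longleftrightarrow> False}"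
  proof -
    have "ft y = -1 \<longleftrightarrow> \<not> ft y = 1" if "y \<in> topspace Y" for y
      using ft_cases[OF that] by auto
    then show "{y \<in> topspace Y. ft y = 1} = {z \<in> topspace Y. ft (actY \<one> z) = 1 \<longleftrightarrow> True}"
      "{y \<in> topspace Y. ft y = -1} = {z \<in> topspace Y. ft (actY \<one> z) = 1 \<longleftrightarrow> False}"
      by (auto simp: Y.act_one)
  qed
  moreover have "W = {y \<in> topspace Y. ft y = 1} \<or> W = {y \<in> topspace Y. ft y = -1}"
    using assms unfolding sign_cover_def by simp
  ultimately show ?thesis
    using openin_sign_level[OF X.one_closed, of True] openin_sign_level[OF X.one_closed, of False]
    by (elim disjE) simp_all
qed

lemma topspace_subset_Union_sign_cover: "topspace Y \<subseteq> \<Union>sign_cover"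
  using ft_cases unfolding sign_cover_def by blast

lemma finite_sign_cover: "finite sign_cover"
  by (simp add: sign_cover_def)

lemma sign_at_lift:
  assumes "y \<in> topspace Y" "g \<in> carrier G" "act g (p y) \<in> X_plus \<union> X_minus"
  shows "ft (actY g y) = 1 \<longleftrightarrow> act g (p y) \<in> X_plus"
proof -
  have "act g (p y) \<noteq> x1"
    using assms(3) unfolding X_plus_def X_minus_def by blast
  then have "ft (actY g y) = f (act g (p y))"
    using ft_lifts_f[OF Y.act_in_topspace[OF assms(2,1)]] p_act[OF assms(2,1)] by simp
  then show ?thesis
    using assms(3) unfolding X_plus_def X_minus_def by auto
qed

lemma pattern_realizable:
  assumes "indep_set G X act X_plus X_minus M" "finite M" "M \<noteq> {}" "T \<subseteq> M"
  shows "\<exists>y\<in>topspace Y. pattern M y = T"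
proof -
  have "\<forall>F (\<omega>::'g \<Rightarrow> bool). F \<subseteq> M \<and> finite F \<and> F \<noteq> {} \<longrightarrow>
      (\<Inter>s\<in>F. preimg X act s (if \<omega> s then X_plus else X_minus)) \<noteq> {}"
    using assms(1) unfolding indep_set_def by (elim conjE)
  then have "(\<Inter>g\<in>M. preimg X act g (if g \<in> T then X_plus else X_minus)) \<noteq> {}"
    using assms(2,3) by (elim allE[of _ M] allE[of _ "\<lambda>g. g \<in> T"]) simp
  then obtain x where x: "\<And>g. g \<in> M \<Longrightarrow> x \<in> preimg X act g (if g \<in> T then X_plus else X_minus)"
    by blast
  have "x \<in> topspace X"
    using x assms(3) unfolding preimg_def by blast
  then obtain y where y: "y \<in> topspace Y" "p y = x"
    using p_image by (metis imageE)
  have "ft (actY g y) = 1 \<longleftrightarrow> g \<in> T" if "g \<in> M" for g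
  proof -
    have "g \<in> carrier G"
      using assms(1) that unfolding indep_set_def by (elim conjE) blast
    moreover have "act g x \<in> (if g \<in> T then X_plus else X_minus)"
      using x[OF that] unfolding preimg_def by blast
    moreover have "X_plus \<inter> X_minus = {}"
      unfolding X_plus_def X_minus_def by auto
    ultimately show ?thesis
      using sign_at_lift[of y g] y by (cases "g \<in> T") auto
  qed
  then show ?thesis
    using y(1) assms(4) unfolding pattern_def by blast
qed


lemma two_pow_card_le_cover_number:
  assumes "indep_set G X act X_plus X_minus M" "finite M" "M \<noteq> {}"
    and "\<And>i. s i \<in> carrier G" "M \<subseteq> s ` {1..n}"
  shows "2 ^ card M \<le> cover_number Y (join_cover Y actY s sign_cover n)"
proof -
  have M_carrier: "M \<subseteq> carrier G"
    using assms(1) unfolding indep_set_def by (elim conjE)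
  have "Pow M \<subseteq> pattern M ` topspace Y"
  proof
    fix T assume "T \<in> Pow M"
    then obtain y where "y \<in> topspace Y" "pattern M y = T"
      using pattern_realizable[OF assms(1-3)] by blast
    then show "T \<in> pattern M ` topspace Y" by blast
  qed
  moreover have "finite (pattern M ` topspace Y)"
  proof (rule finite_subset)
    show "pattern M ` topspace Y \<subseteq> Pow M"
      using pattern_subset by blast
  qed (simp add: assms(2))
  ultimately have "card (Pow M) \<le> card (pattern M ` topspace Y)"
    by (intro card_mono)
  also have "\<dots> \<le> cover_number Y (join_cover Y actY s sign_cover n)"
  proof (rule card_image_le_cover_number)
    show "finite (join_cover Y actY s sign_cover n)"
      by (rule finite_join_cover[OF finite_sign_cover])
    show "topspace Y \<subseteq> \<Union>(join_cover Y actY s sign_cover n)"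
      using topspace_subset_Union_sign_cover Y.act_in_topspace assms(4)
      by (intro topspace_subset_Union_join_cover) auto
  next
    fix W y z
    assume W: "W \<in> join_cover Y actY s sign_cover n" and y: "y \<in> W \<inter> topspace Y" and z: "z \<in> W \<inter> topspace Y"
    obtain V where V: "\<And>i. i \<in> {1..n} \<Longrightarrow> V i \<in> sign_cover"
        "W = topspace Y \<inter> (\<Inter>i\<in>{1..n}. preimg Y actY (s i) (V i))"
      using W by (elim join_coverE) blast
    have "ft (actY g y) = ft (actY g z)" if g: "g \<in> M" for g
    proof -
      obtain i where i: "i \<in> {1..n}" "g = s i"
        using g assms(5) by blast
      have "actY g y \<in> V i" "actY g z \<in> V i"
        using y z V(2) i unfolding preimg_def by auto
      then show ?thesis
        using V(1)[OF i(1)] unfolding sign_cover_def by auto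
    qed
    then show "pattern M y = pattern M z"
      using pattern_eq_iff[OF _ _ M_carrier] y z by simp
  qed
  finally show ?thesis
    using assms(2) by (simp add: card_Pow)
qed

lemma indep_if_shattered:
  assumes "S \<subseteq> carrier G" "F \<subseteq> S" "finite F" "shatters (pattern S ` topspace Y) F"
  shows "indep_set G X act X_plus X_minus F"
  unfolding indep_set_def
proof (intro conjI allI impI)
  show F_carrier: "F \<subseteq> carrier G"
    using assms(1,2) by (rule order_trans[rotated])
  fix F0 and \<omega> :: "'g \<Rightarrow> bool"
  assume F0: "F0 \<subseteq> F \<and> finite F0 \<and> F0 \<noteq> {}"
  have "{g \<in> F. \<omega> g} \<subseteq> F" by blast
  then obtain \<pi> where "\<pi> \<in> pattern S ` topspace Y" "\<pi> \<inter> F = {g \<in> F. \<omega> g}"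
    using assms(4) unfolding shatters_def by blast
  then obtain y where y: "y \<in> topspace Y" "pattern S y \<inter> F = {g \<in> F. \<omega> g}"
    by blast
  have "pattern F y = {g \<in> F. \<omega> g}"
    using y(2) pattern_restrict[OF assms(2)] by simp
  obtain z where z: "z \<in> topspace Y" "pattern F z = pattern F y" "p z \<notin> orbit_of G act x1"
    using exists_off_orbit_in_open[OF openin_pattern_class[OF assms(3) F_carrier, of "pattern F y"]] y(1)
    by blast
  have "act g (p z) \<in> (if \<omega> g then X_plus else X_minus)" if "g \<in> F" for g
  proof -
    have g: "g \<in> carrier G" using that F_carrier by blast
    have "act g (p z) \<notin> orbit_of G act x1"
      using z(3) X.act_in_orbit_of_iff[OF g p_in_topspace[OF z(1)] x1_in] by simp
    then have off: "act g (p z) \<in> topspace X - {x1}"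
      using X.act_in_topspace[OF g p_in_topspace[OF z(1)]] X.in_orbit_of_self[OF x1_in] by auto
    have "ft (actY g z) = f (act g (p z))"
      using ft_lifts_f[OF Y.act_in_topspace[OF g z(1)]] p_act[OF g z(1)] off by simp
    moreover have "g \<in> pattern F z \<longleftrightarrow> \<omega> g"
      using z(2) \<open>pattern F y = {g \<in> F. \<omega> g}\<close> that by simp
    then have "ft (actY g z) = 1 \<longleftrightarrow> \<omega> g"
      using that unfolding pattern_def by simp
    ultimately show ?thesis
      using off ft_cases[OF Y.act_in_topspace[OF g z(1)]] unfolding X_plus_def X_minus_def by auto
  qed
  then have "p z \<in> (\<Inter>g\<in>F0. preimg X act g (if \<omega> g then X_plus else X_minus))"
    using F0 p_in_topspace[OF z(1)] unfolding preimg_def by blast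
  then show "(\<Inter>g\<in>F0. preimg X act g (if \<omega> g then X_plus else X_minus)) \<noteq> {}"
    by blast
qed

lemma card_patterns_le:
  assumes "finite S" "S \<subseteq> carrier G"
    and "\<And>M. finite M \<Longrightarrow> indep_set G X act X_plus X_minus M \<Longrightarrow> card M < d"
  shows "card (pattern S ` topspace Y) \<le> (d + 1) * (card S + 1) ^ d"
proof -
  have "card (pattern S ` topspace Y) \<le> card {F. F \<subseteq> S \<and> shatters (pattern S ` topspace Y) F}"
    using assms(1) pattern_subset by (intro card_le_card_shattered) auto
  also have "\<dots> \<le> card {F. F \<subseteq> S \<and> card F < d}"
  proof (rule card_mono)
    show "finite {F. F \<subseteq> S \<and> card F < d}"
      using assms(1) by simp
    show "{F. F \<subseteq> S \<and> shatters (pattern S ` topspace Y) F} \<subseteq> {F. F \<subseteq> S \<and> card F < d}"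
    proof
      fix F assume "F \<in> {F. F \<subseteq> S \<and> shatters (pattern S ` topspace Y) F}"
      then have F: "F \<subseteq> S" "shatters (pattern S ` topspace Y) F"
        by simp_all
      then have "finite F"
        using assms(1) finite_subset by blast
      then have "card F < d"
        using F assms(2) by (intro assms(3) indep_if_shattered)
      then show "F \<in> {F. F \<subseteq> S \<and> card F < d}"
        using F by simp
    qed
  qed
  also have "\<dots> \<le> (d + 1) * (card S + 1) ^ d"
    using assms(1) by (rule card_subsets_card_less)
  finally show ?thesis .
qed

lemma null_if_null_extension: "null_action G Y actY \<Longrightarrow> null_action G X act"
  using Y.cont_action X.cont_action continuous_map_p p_image p_act by (rule null_action_factor)

lemma not_null_if_arb_large_indep:
  assumes "arb_large_indep G X act X_plus X_minus"
  shows "\<not> null_action G Y actY"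
proof
  assume null: "null_action G Y actY"
  have "\<forall>j. \<exists>M. finite M \<and> card M = 2 ^ j \<and> indep_set G X act X_plus X_minus M"
  proof
    fix j :: nat
    obtain M0 where M0: "finite M0" "2 ^ j \<le> card M0" "indep_set G X act X_plus X_minus M0"
      using assms unfolding arb_large_indep_def by blast
    obtain M where "M \<subseteq> M0" "card M = 2 ^ j"
      using obtain_subset_with_card_n[OF M0(2)] by blast
    moreover have "finite M"
      using \<open>M \<subseteq> M0\<close> M0(1) by (rule finite_subset)
    moreover have "indep_set G X act X_plus X_minus M"
      using M0(3) \<open>M \<subseteq> M0\<close> by (rule indep_set_subset)
    ultimately show "\<exists>M. finite M \<and> card M = 2 ^ j \<and> indep_set G X act X_plus X_minus M"
      by blast
  qed
  then obtain M where "\<forall>j. finite (M j) \<and> card (M j) = 2 ^ j \<and> indep_set G X act X_plus X_minus (M j)"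
    by (rule choice[THEN exE])
  then have M: "\<And>j. finite (M j)" "\<And>j. card (M j) = 2 ^ j" "\<And>j. indep_set G X act X_plus X_minus (M j)"
    by simp_all
  have M_carrier: "M j \<subseteq> carrier G" for j
    using M(3)[of j] unfolding indep_set_def by (elim conjE)
  have card_le: "card (M j) \<le> 2 ^ j" for j
    using M(2) by simp
  obtain s :: "nat \<Rightarrow> 'g" where s: "\<And>i. s i \<in> carrier G" "\<And>j. M j \<subseteq> s ` {1..2 ^ Suc j}"
    by (rule exists_seq_enumerating_blocks[OF M(1) card_le M_carrier X.one_closed]) blast
  have "2 ^ 2 ^ j \<le> cover_number Y (join_cover Y actY s sign_cover (2 ^ Suc j))" for j
  proof -
    have "M j \<noteq> {}"
      using M(2)[of j] by auto
    then show ?thesis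
      using two_pow_card_le_cover_number[OF M(3) M(1) _ s] M(2) by simp
  qed
  then have "ereal (ln 2 / 2) \<le> limsup (\<lambda>n. ereal (ln (real (cover_number Y (join_cover Y actY s sign_cover n))) / real n))"
    by (rule limsup_ln_over_n_ge_if_doubly_exponential)
  also have "\<dots> = 0"
    using null s(1) finite_sign_cover sign_cover_open topspace_subset_Union_sign_cover
    by (rule null_actionD)
  finally show False
    by simp
qed

definition cell_base :: "'b \<Rightarrow> 'b set set" where
  "cell_base y = {cell A T y | A T. openin X A \<and> p y \<in> A \<and> finite T \<and> T \<subseteq> carrier G}"

lemma cell_baseI:
  "openin X A \<Longrightarrow> p y \<in> A \<Longrightarrow> finite T \<Longrightarrow> T \<subseteq> carrier G \<Longrightarrow> cell A T y \<in> cell_base y"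
  unfolding cell_base_def by blast

lemma cell_baseE:
  assumes "C \<in> cell_base y"
  obtains A T where "openin X A" "p y \<in> A" "finite T" "T \<subseteq> carrier G" "C = cell A T y"
  using assms unfolding cell_base_def by blast

lemma cell_base_Int:
  assumes "C1 \<in> cell_base y" "C2 \<in> cell_base y"
  shows "\<exists>C\<in>cell_base y. C \<subseteq> C1 \<inter> C2"
proof -
  obtain A1 T1 where 1: "openin X A1" "p y \<in> A1" "finite T1" "T1 \<subseteq> carrier G" "C1 = cell A1 T1 y"
    using assms(1) by (rule cell_baseE)
  obtain A2 T2 where 2: "openin X A2" "p y \<in> A2" "finite T2" "T2 \<subseteq> carrier G" "C2 = cell A2 T2 y"
    using assms(2) by (rule cell_baseE)
  have "cell (A1 \<inter> A2) (T1 \<union> T2) y \<in> cell_base y"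
    using 1 2 by (intro cell_baseI) auto
  moreover have "cell (A1 \<inter> A2) (T1 \<union> T2) y \<subseteq> C1 \<inter> C2"
    unfolding 1(5) 2(5) by (intro Int_greatest cell_mono) auto
  ultimately show ?thesis ..
qed

lemma cell_base_avoiding_finite_union:
  assumes "y \<in> topspace Y" "finite \<F>" "\<And>N. N \<in> \<F> \<Longrightarrow> \<exists>C\<in>cell_base y. C \<inter> N = {}"
  shows "\<exists>C\<in>cell_base y. C \<inter> \<Union>\<F> = {}"
  using assms(2,3)
proof (induction \<F> rule: finite_induct)
  case empty
  have "cell (topspace X) {} y \<in> cell_base y"
    using p_in_topspace[OF assms(1)] by (intro cell_baseI) auto
  then show ?case by blast
next
  case (insert N \<F>)
  obtain C1 where "C1 \<in> cell_base y" "C1 \<inter> \<Union>\<F> = {}"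
    using insert.IH insert.prems by blast
  moreover obtain C2 where "C2 \<in> cell_base y" "C2 \<inter> N = {}"
    using insert.prems by blast
  ultimately obtain C where "C \<in> cell_base y" "C \<subseteq> C1 \<inter> C2"
    using cell_base_Int by blast
  then show ?case
    using \<open>C1 \<inter> \<Union>\<F> = {}\<close> \<open>C2 \<inter> N = {}\<close> by blast
qed

lemma cell_base_subset_open:
  assumes "y \<in> topspace Y" "openin Y W" "y \<in> W"
  shows "\<exists>C\<in>cell_base y. C \<subseteq> W"
proof -
  have separated: "\<exists>N. openin Y N \<and> z \<in> N \<and> (\<exists>C\<in>cell_base y. C \<inter> N = {})"
    if z: "z \<in> topspace Y - W" for z
  proof (cases "p z = p y")
    case False
    moreover have "p z \<in> topspace X" "p y \<in> topspace X"
      using z assms(1) p_in_topspace by auto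
    ultimately obtain U V where UV: "openin X U" "openin X V" "p z \<in> U" "p y \<in> V" "disjnt U V"
      using Hausdorff_X unfolding Hausdorff_space_def by metis
    have "cell V {} y \<in> cell_base y"
      using UV(2,4) by (intro cell_baseI) auto
    moreover have "cell V {} y \<inter> {w \<in> topspace Y. p w \<in> U} = {}"
      using UV(5) cell_subset_preimage[of V "{}" y] unfolding disjnt_def by blast
    moreover have "openin Y {w \<in> topspace Y. p w \<in> U}"
      using openin_continuous_map_preimage[OF continuous_map_p UV(1)] .
    ultimately show ?thesis
      using z UV(3) by (intro exI[of _ "{w \<in> topspace Y. p w \<in> U}"]) blast
  next
    case True
    moreover have "z \<noteq> y"
      using z assms(3) by blast
    ultimately obtain t where t: "t \<in> carrier G" "ft (actY t z) \<noteq> ft (actY t y)"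
      using fibre_separated_by_sign[of z y] z assms(1) by auto
    define N where "N = {w \<in> topspace Y. ft (actY t w) = 1 \<longleftrightarrow> ft (actY t z) = 1}"
    have "cell (topspace X) {t} y \<in> cell_base y"
      using t(1) p_in_topspace[OF assms(1)] by (intro cell_baseI) auto
    moreover have "cell (topspace X) {t} y \<inter> N = {}"
    proof -
      have "pattern {t} w \<noteq> pattern {t} y" if "w \<in> N" for w
      proof -
        have w: "w \<in> topspace Y" "ft (actY t w) = 1 \<longleftrightarrow> ft (actY t z) = 1"
          using that unfolding N_def by simp_all
        have "ft (actY t w) = ft (actY t z)"
          using w(2) ft_cases[OF Y.act_in_topspace[OF t(1) w(1)]]
            ft_cases[OF Y.act_in_topspace[OF t(1), of z]] z by auto
        then show ?thesis
          using t pattern_eq_iff[of y w "{t}"] assms(1) w(1) by simp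
      qed
      then show ?thesis
        unfolding cell_def by auto
    qed
    moreover have "openin Y N"
      unfolding N_def using t(1) by (rule openin_sign_level)
    moreover have "z \<in> N"
      using z unfolding N_def by simp
    ultimately show ?thesis
      by (intro exI[of _ N]) blast
  qed
  have "compactin Y (topspace Y - W)"
    using compact_Y closedin_diff[OF closedin_topspace assms(2)] by (rule closedin_compact_space)
  moreover have "topspace Y - W \<subseteq> \<Union>{N. openin Y N \<and> (\<exists>C\<in>cell_base y. C \<inter> N = {})}"
    using separated by blast
  ultimately obtain \<F> where \<F>: "finite \<F>" "\<F> \<subseteq> {N. openin Y N \<and> (\<exists>C\<in>cell_base y. C \<inter> N = {})}"
      "topspace Y - W \<subseteq> \<Union>\<F>"
    using compactinD[of Y "topspace Y - W" "{N. openin Y N \<and> (\<exists>C\<in>cell_base y. C \<inter> N = {})}"]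
    by auto
  have "\<exists>C\<in>cell_base y. C \<inter> N = {}" if "N \<in> \<F>" for N
    using that \<F>(2) by blast
  then obtain C where C: "C \<in> cell_base y" "C \<inter> \<Union>\<F> = {}"
    using cell_base_avoiding_finite_union[OF assms(1) \<F>(1)] by blast
  moreover have "C \<subseteq> topspace Y"
    using C(1) by (rule cell_baseE) (use cell_subset_topspace in simp)
  ultimately have "C \<subseteq> W"
    using \<F>(3) by blast
  then show ?thesis
    using C(1) by blast
qed

lemma uniform_cell_nbhd:
  assumes Y0: "finite Y0" "Y0 \<subseteq> topspace Y"
    and AT: "\<And>y. y \<in> Y0 \<Longrightarrow> openin X (A y)" "\<And>y. y \<in> Y0 \<Longrightarrow> finite (T y)"
      "\<And>y. y \<in> Y0 \<Longrightarrow> T y \<subseteq> carrier G"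
    and cover: "topspace Y \<subseteq> (\<Union>y\<in>Y0. cell (A y) (T y) y)"
    and x: "x \<in> topspace X"
  obtains B where "openin X B" "x \<in> B"
    "\<And>y. y \<in> topspace Y \<Longrightarrow> p y \<in> B \<Longrightarrow> \<exists>y'\<in>Y0. cell B (\<Union>(T ` Y0)) y \<subseteq> cell (A y') (T y') y'"
proof -
  define T0 where "T0 = \<Union>(T ` Y0)"
  have T0: "finite T0" "T0 \<subseteq> carrier G"
    using Y0 AT(2,3) unfolding T0_def by auto
  define Bad where "Bad = topspace Y -
    (\<Union>w\<in>{w \<in> topspace Y. p w = x}. {z \<in> topspace Y. pattern T0 z = pattern T0 w})"
  have "closedin Y Bad"
    unfolding Bad_def using openin_pattern_class[OF T0]
    by (intro closedin_diff closedin_topspace openin_Union) auto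
  then have closed_image: "closedin X (p ` Bad)"
    using continuous_imp_closed_map[OF continuous_map_p compact_Y Hausdorff_X]
    unfolding closed_map_def by blast
  have "x \<notin> p ` Bad"
  proof
    assume "x \<in> p ` Bad"
    then obtain z where "z \<in> Bad" "p z = x" by blast
    then show False unfolding Bad_def by blast
  qed
  define Y1 where "Y1 = {y' \<in> Y0. \<exists>w\<in>topspace Y. p w = x \<and> w \<in> cell (A y') (T y') y'}"
  define B where "B = (topspace X - p ` Bad) \<inter> \<Inter>(A ` Y1)"
  show thesis
  proof (rule that)
    show "openin X B"
      unfolding B_def using closed_image Y0(1) AT(1)
      by (intro openin_Int_Inter openin_diff openin_topspace) (auto simp: Y1_def)
    have "x \<in> A y'" if "y' \<in> Y1" for y'
      using that cell_subset_preimage unfolding Y1_def by blast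
    then show "x \<in> B"
      unfolding B_def using x \<open>x \<notin> p ` Bad\<close> by blast
  next
    fix y assume y: "y \<in> topspace Y" "p y \<in> B"
    then have "y \<notin> Bad"
      unfolding B_def by blast
    then obtain w where w: "w \<in> topspace Y" "p w = x" "pattern T0 y = pattern T0 w"
      using y(1) unfolding Bad_def by blast
    then obtain y' where y': "y' \<in> Y0" "w \<in> cell (A y') (T y') y'"
      using cover by blast
    then have "y' \<in> Y1" "T y' \<subseteq> T0"
      using w unfolding Y1_def T0_def by auto
    then have "B \<subseteq> A y'"
      unfolding B_def by blast
    have "cell B T0 y = cell B T0 w"
      using w(3) by (rule cell_cong)
    also have "\<dots> \<subseteq> cell (A y') (T y') w"
      using \<open>B \<subseteq> A y'\<close> \<open>T y' \<subseteq> T0\<close> by (rule cell_mono)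
    also have "\<dots> = cell (A y') (T y') y'"
      using y'(2) by (intro cell_cong pattern_eq_if_in_cell)
    finally show "\<exists>y'\<in>Y0. cell B (\<Union>(T ` Y0)) y \<subseteq> cell (A y') (T y') y'"
      using y'(1) unfolding T0_def by blast
  qed
qed


lemma cells_refine_open_cover:
  assumes "\<And>W. W \<in> U \<Longrightarrow> openin Y W" "topspace Y \<subseteq> \<Union>U"
  obtains T V where "finite T" "T \<subseteq> carrier G" "finite V" "\<And>A. A \<in> V \<Longrightarrow> openin X A"
    "topspace X \<subseteq> \<Union>V" "\<And>A y. A \<in> V \<Longrightarrow> y \<in> topspace Y \<Longrightarrow> p y \<in> A \<Longrightarrow> \<exists>W\<in>U. cell A T y \<subseteq> W"
proof -
  have "\<forall>y\<in>topspace Y. \<exists>AT. openin X (fst AT) \<and> p y \<in> fst AT \<and> finite (snd AT) \<and>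
      snd AT \<subseteq> carrier G \<and> (\<exists>W\<in>U. cell (fst AT) (snd AT) y \<subseteq> W)"
  proof
    fix y assume y: "y \<in> topspace Y"
    then obtain W where "W \<in> U" "y \<in> W"
      using assms(2) by blast
    then obtain C where "C \<in> cell_base y" "C \<subseteq> W"
      using cell_base_subset_open[OF y assms(1)] by blast
    then obtain A T where "openin X A" "p y \<in> A" "finite T" "T \<subseteq> carrier G" "cell A T y \<subseteq> W"
      by (elim cell_baseE) blast
    then show "\<exists>AT. openin X (fst AT) \<and> p y \<in> fst AT \<and> finite (snd AT) \<and>
        snd AT \<subseteq> carrier G \<and> (\<exists>W\<in>U. cell (fst AT) (snd AT) y \<subseteq> W)"
      using \<open>W \<in> U\<close> by (intro exI[of _ "(A, T)"]) auto
  qed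
  then obtain AT where AT: "\<forall>y\<in>topspace Y. openin X (fst (AT y)) \<and> p y \<in> fst (AT y) \<and>
      finite (snd (AT y)) \<and> snd (AT y) \<subseteq> carrier G \<and> (\<exists>W\<in>U. cell (fst (AT y)) (snd (AT y)) y \<subseteq> W)"
    by (rule bchoice[THEN exE])
  define Af where "Af y = fst (AT y)" for y
  define Tf where "Tf y = snd (AT y)" for y
  obtain Y0 where Y0: "Y0 \<subseteq> topspace Y" "finite Y0" "topspace Y \<subseteq> (\<Union>y\<in>Y0. cell (Af y) (Tf y) y)"
    using compact_Y
  proof (rule compact_space_finite_subcover_image)
    show "openin Y (cell (Af y) (Tf y) y)" if "y \<in> topspace Y" for y
      using AT that unfolding Af_def Tf_def by (intro openin_cell) auto
    show "y \<in> cell (Af y) (Tf y) y" if "y \<in> topspace Y" for y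
      using AT that unfolding Af_def Tf_def by (intro in_cell_self) auto
  qed
  define T where "T = \<Union>(Tf ` Y0)"
  have "\<forall>x\<in>topspace X. \<exists>B. openin X B \<and> x \<in> B \<and>
      (\<forall>y\<in>topspace Y. p y \<in> B \<longrightarrow> (\<exists>y'\<in>Y0. cell B T y \<subseteq> cell (Af y') (Tf y') y'))"
  proof
    fix x assume "x \<in> topspace X"
    with Y0 obtain B where "openin X B" "x \<in> B"
      "\<And>y. y \<in> topspace Y \<Longrightarrow> p y \<in> B \<Longrightarrow> \<exists>y'\<in>Y0. cell B T y \<subseteq> cell (Af y') (Tf y') y'"
      unfolding T_def by (elim uniform_cell_nbhd) (use AT in \<open>auto simp: Af_def Tf_def\<close>)
    then show "\<exists>B. openin X B \<and> x \<in> B \<and>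
        (\<forall>y\<in>topspace Y. p y \<in> B \<longrightarrow> (\<exists>y'\<in>Y0. cell B T y \<subseteq> cell (Af y') (Tf y') y'))"
      by blast
  qed
  then obtain Bf where Bf: "\<forall>x\<in>topspace X. openin X (Bf x) \<and> x \<in> Bf x \<and>
      (\<forall>y\<in>topspace Y. p y \<in> Bf x \<longrightarrow> (\<exists>y'\<in>Y0. cell (Bf x) T y \<subseteq> cell (Af y') (Tf y') y'))"
    by (rule bchoice[THEN exE])
  obtain X0 where X0: "X0 \<subseteq> topspace X" "finite X0" "topspace X \<subseteq> \<Union>(Bf ` X0)"
    using compact_X by (rule compact_space_finite_subcover_image[where Q = Bf]) (use Bf in auto)
  show thesis
  proof (rule that[of T "Bf ` X0"])
    show "finite T" "T \<subseteq> carrier G"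
      using Y0 AT unfolding T_def Tf_def by auto
    show "finite (Bf ` X0)" "topspace X \<subseteq> \<Union>(Bf ` X0)"
      using X0 by auto
    show "openin X A" if "A \<in> Bf ` X0" for A
      using that X0(1) Bf by auto
    fix A y assume A: "A \<in> Bf ` X0" and y: "y \<in> topspace Y" "p y \<in> A"
    then obtain y' where "y' \<in> Y0" "cell A T y \<subseteq> cell (Af y') (Tf y') y'"
      using X0(1) Bf by blast
    moreover obtain W where "W \<in> U" "cell (Af y') (Tf y') y' \<subseteq> W"
      using AT calculation(1) Y0(1) unfolding Af_def Tf_def by blast
    ultimately show "\<exists>W\<in>U. cell A T y \<subseteq> W"
      by blast
  qed
qed

lemma join_cell_subset:
  assumes refines: "\<And>A y. A \<in> V \<Longrightarrow> y \<in> topspace Y \<Longrightarrow> p y \<in> A \<Longrightarrow> \<exists>W\<in>U. cell A T y \<subseteq> W"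
    and "T \<subseteq> carrier G" "\<And>i. s i \<in> carrier G" "(\<lambda>(t, i). t \<otimes> s i) ` (T \<times> {1..n}) \<subseteq> S"
    and "c \<in> join_cover X act s V n" "y \<in> topspace Y" "p y \<in> c"
  shows "\<exists>W\<in>join_cover Y actY s U n. {z \<in> topspace Y. p z \<in> c \<and> pattern S z = pattern S y} \<subseteq> W"
proof -
  obtain A where A: "\<And>i. i \<in> {1..n} \<Longrightarrow> A i \<in> V"
      "c = topspace X \<inter> (\<Inter>i\<in>{1..n}. preimg X act (s i) (A i))"
    using assms(5) by (elim join_coverE) blast
  have "\<forall>i\<in>{1..n}. \<exists>W. W \<in> U \<and> cell (A i) T (actY (s i) y) \<subseteq> W"
  proof
    fix i assume i: "i \<in> {1..n}"
    have "p (actY (s i) y) \<in> A i"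
      using assms(3,6,7) A(2) i p_act unfolding preimg_def by auto
    then show "\<exists>W. W \<in> U \<and> cell (A i) T (actY (s i) y) \<subseteq> W"
      using refines[OF A(1)[OF i] Y.act_in_topspace[OF assms(3,6)]] by blast
  qed
  then obtain W where W: "\<forall>i\<in>{1..n}. W i \<in> U \<and> cell (A i) T (actY (s i) y) \<subseteq> W i"
    by (rule bchoice[THEN exE])
  have "{z \<in> topspace Y. p z \<in> c \<and> pattern S z = pattern S y}
      \<subseteq> topspace Y \<inter> (\<Inter>i\<in>{1..n}. preimg Y actY (s i) (W i))"
  proof
    fix z assume "z \<in> {z \<in> topspace Y. p z \<in> c \<and> pattern S z = pattern S y}"
    then have z: "z \<in> topspace Y" "p z \<in> c" "pattern S z = pattern S y"
      by simp_all
    have "actY (s i) z \<in> cell (A i) T (actY (s i) y)" if i: "i \<in> {1..n}" for i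
    proof -
      have "p (actY (s i) z) \<in> A i"
        using assms(3) z(1,2) A(2) i p_act unfolding preimg_def by auto
      moreover have "(\<lambda>t. t \<otimes> s i) ` T \<subseteq> S"
      proof (rule image_subsetI)
        fix t assume "t \<in> T"
        then have "(t, i) \<in> T \<times> {1..n}" using i by simp
        then show "t \<otimes> s i \<in> S"
          using assms(4) by (metis (no_types, lifting) case_prod_conv image_subset_iff)
      qed
      then have "pattern T (actY (s i) z) = pattern T (actY (s i) y)"
        using assms(2,3,6) z(1,3) by (intro pattern_act_eq)
      ultimately show ?thesis
        unfolding cell_def using Y.act_in_topspace[OF assms(3) z(1)] by simp
    qed
    then show "z \<in> topspace Y \<inter> (\<Inter>i\<in>{1..n}. preimg Y actY (s i) (W i))"
      using W z(1) Y.act_in_topspace[OF assms(3) z(1)] unfolding preimg_def by blast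
  qed
  moreover have "topspace Y \<inter> (\<Inter>i\<in>{1..n}. preimg Y actY (s i) (W i)) \<in> join_cover Y actY s U n"
    using W by (intro join_coverI) blast
  ultimately show ?thesis
    by blast
qed


lemma cover_number_join_le:
  assumes V: "finite V" "topspace X \<subseteq> \<Union>V"
    and T: "finite T" "T \<subseteq> carrier G"
    and refines: "\<And>A y. A \<in> V \<Longrightarrow> y \<in> topspace Y \<Longrightarrow> p y \<in> A \<Longrightarrow> \<exists>W\<in>U. cell A T y \<subseteq> W"
    and s: "\<And>i. s i \<in> carrier G"
    and d: "\<And>M. finite M \<Longrightarrow> indep_set G X act X_plus X_minus M \<Longrightarrow> card M < d"
  shows "cover_number Y (join_cover Y actY s U n)
    \<le> cover_number X (join_cover X act s V n) * ((d + 1) * (card T + 1) ^ d) * (n + 1) ^ d"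
proof -
  define S where "S = (\<lambda>(t, i). t \<otimes> s i) ` (T \<times> {1..n})"
  have S: "finite S" "S \<subseteq> carrier G"
    using T s unfolding S_def by auto
  have "card S \<le> card T * n"
    unfolding S_def using card_image_le[of "T \<times> {1..n}"] T(1) by (simp add: card_cartesian_product)
  define P where "P = pattern S ` topspace Y"
  have "finite P"
    unfolding P_def by (rule finite_subset[of _ "Pow S"]) (use S(1) pattern_subset in auto)
  have "card P \<le> (d + 1) * (card S + 1) ^ d"
    unfolding P_def using S d by (rule card_patterns_le)
  also have "\<dots> \<le> (d + 1) * ((card T + 1) * (n + 1)) ^ d"
    using \<open>card S \<le> card T * n\<close> by (intro mult_le_mono2 power_mono) (simp_all add: algebra_simps)
  also have "\<dots> = (d + 1) * (card T + 1) ^ d * (n + 1) ^ d"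
    by (simp only: power_mult_distrib mult.assoc)
  finally have card_P: "card P \<le> (d + 1) * (card T + 1) ^ d * (n + 1) ^ d" .
  have "topspace X \<subseteq> \<Union>(join_cover X act s V n)"
    using V(2) X.act_in_topspace s by (intro topspace_subset_Union_join_cover) auto
  then obtain C where C: "C \<subseteq> join_cover X act s V n" "finite C"
      "card C = cover_number X (join_cover X act s V n)" "topspace X \<subseteq> \<Union>C"
    by (rule cover_number_attained[OF finite_join_cover[OF V(1)]])
  define piece where "piece c \<pi> = {z \<in> topspace Y. p z \<in> c \<and> pattern S z = \<pi>}" for c \<pi>
  have "cover_number Y (join_cover Y actY s U n) \<le> card ((\<lambda>(c, \<pi>). piece c \<pi>) ` (C \<times> P))"
  proof (rule cover_number_le_card_refinement)
    show "finite ((\<lambda>(c, \<pi>). piece c \<pi>) ` (C \<times> P))"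
      using C(2) \<open>finite P\<close> by simp
    show "topspace Y \<subseteq> \<Union>((\<lambda>(c, \<pi>). piece c \<pi>) ` (C \<times> P))"
    proof
      fix y assume y: "y \<in> topspace Y"
      then obtain c where "c \<in> C" "p y \<in> c"
        using C(4) p_in_topspace by blast
      moreover have "pattern S y \<in> P"
        using y unfolding P_def by blast
      ultimately have "piece c (pattern S y) \<in> (\<lambda>(c, \<pi>). piece c \<pi>) ` (C \<times> P)"
        by (intro rev_image_eqI[of "(c, pattern S y)"]) simp_all
      moreover have "y \<in> piece c (pattern S y)"
        using y \<open>p y \<in> c\<close> unfolding piece_def by simp
      ultimately show "y \<in> \<Union>((\<lambda>(c, \<pi>). piece c \<pi>) ` (C \<times> P))"
        by (rule UnionI)
    qed
  next
    fix A y assume A: "A \<in> (\<lambda>(c, \<pi>). piece c \<pi>) ` (C \<times> P)" "y \<in> A"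
    then obtain c \<pi> where "c \<in> C" "A = piece c \<pi>"
      by auto
    then have c: "c \<in> join_cover X act s V n" and y: "y \<in> topspace Y" "p y \<in> c"
      and A_eq: "A = piece c (pattern S y)"
      using A(2) C(1) unfolding piece_def by auto
    have "(\<lambda>(t, i). t \<otimes> s i) ` (T \<times> {1..n}) \<subseteq> S"
      by (simp add: S_def)
    from join_cell_subset[OF refines T(2) s this c y]
    show "\<exists>W\<in>join_cover Y actY s U n. A \<subseteq> W"
      unfolding A_eq piece_def .
  qed
  also have "\<dots> \<le> card (C \<times> P)"
    by (rule card_image_le) (simp add: C(2) \<open>finite P\<close>)
  also have "\<dots> = card C * card P"
    by (rule card_cartesian_product)
  also have "\<dots> \<le> cover_number X (join_cover X act s V n) * ((d + 1) * (card T + 1) ^ d * (n + 1) ^ d)"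
    using C(3) card_P by simp
  finally show ?thesis
    by (simp add: mult.assoc)
qed

lemma null_if_null_and_not_arb_large_indep:
  assumes null_X: "null_action G X act" and "\<not> arb_large_indep G X act X_plus X_minus"
  shows "null_action G Y actY"
  unfolding null_action_def
proof (intro allI impI, elim conjE)
  fix s :: "nat \<Rightarrow> 'g" and U :: "'b set set"
  assume s: "\<forall>n. s n \<in> carrier G" and U: "finite U" "\<forall>W\<in>U. openin Y W" "topspace Y \<subseteq> \<Union>U"
  obtain d where d: "\<And>M. finite M \<Longrightarrow> indep_set G X act X_plus X_minus M \<Longrightarrow> card M < d"
    using assms(2) unfolding arb_large_indep_def by (meson not_le)
  obtain T V where TV: "finite T" "T \<subseteq> carrier G" "finite V" "\<And>A. A \<in> V \<Longrightarrow> openin X A"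
      "topspace X \<subseteq> \<Union>V" "\<And>A y. A \<in> V \<Longrightarrow> y \<in> topspace Y \<Longrightarrow> p y \<in> A \<Longrightarrow> \<exists>W\<in>U. cell A T y \<subseteq> W"
  proof (rule cells_refine_open_cover)
    show "openin Y W" if "W \<in> U" for W
      using that U(2) by blast
  qed (use U(3) in blast)+
  have limsup_X: "limsup (\<lambda>n. ereal (ln (real (cover_number X (join_cover X act s V n))) / real n)) = 0"
    by (rule null_actionD[OF null_X]) (use s TV in auto)
  show "limsup (\<lambda>n. ereal (ln (real (cover_number Y (join_cover Y actY s U n))) / real n)) = 0"
  proof (rule limsup_ln_over_n_eq_0_if_poly_bounded[OF cover_number_join_le _ limsup_X])
    have "1 \<le> (card T + 1) ^ d"
      by simp
    then show "1 \<le> (d + 1) * (card T + 1) ^ d"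
      by (rule order_trans) simp
  qed (use s TV d in auto)
qed

end

theorem proposition3p1:
  fixes G :: "('g,'m) monoid_scheme" and X :: "'a topology" and act :: "'g \<Rightarrow> 'a \<Rightarrow> 'a"
    and x1 :: 'a and f :: "'a \<Rightarrow> real"
    and Y :: "'b topology" and actY :: "'g \<Rightarrow> 'b \<Rightarrow> 'b" and p :: "'b \<Rightarrow> 'a"
  assumes "group G" and "countable (carrier G)" and "infinite (carrier G)"
    and "compact_space X" and "metrizable_space X"
    and "cont_action G X act" and "minimal_action G X act"
    and "\<exists>x\<in>topspace X. \<exists>y\<in>topspace X. y \<notin> orbit_of G act x"
    and "x1 \<in> topspace X"
    and "\<forall>s\<in>carrier G. act s x1 = x1 \<longrightarrow> s = \<one>\<^bsub>G\<^esub>"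
    and "continuous_map (subtopology X (topspace X - {x1})) euclideanreal f"
    and "f ` (topspace X - {x1}) \<subseteq> {1, -1}"
    and "\<not> (\<exists>g. continuous_map X euclideanreal g \<and> g ` topspace X \<subseteq> {1, -1} \<and>
                (\<forall>x\<in>topspace X - {x1}. g x = f x))"
    and "mcmahon_extension G X act x1 f Y actY p"
  shows "null_action G Y actY \<longleftrightarrow>
           (null_action G X act \<and>
            \<not> arb_large_indep G X act {x \<in> topspace X - {x1}. f x = 1} {x \<in> topspace X - {x1}. f x = -1})"
proof -
  obtain ft where ft: "continuous_map Y euclideanreal ft" "ft ` topspace Y \<subseteq> {1, -1}"
      "\<forall>y\<in>topspace Y. p y \<noteq> x1 \<longrightarrow> ft y = f (p y)"
    using assms(14) unfolding mcmahon_extension_def by (elim conjE exE) blast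
  interpret mcmahon_ext G X act x1 f Y actY p ft
    using assms(1,4,6,8,9,12,13,14) ft(1,2) metrizable_imp_Hausdorff_space[OF assms(5)] ft(3)[rule_format]
    by (intro mcmahon_ext.intro continuous_action.intro mcmahon_ext_axioms.intro
        continuous_action_axioms.intro) assumption+
  show ?thesis
    using null_if_null_extension not_null_if_arb_large_indep null_if_null_and_not_arb_large_indep
    unfolding X_plus_def X_minus_def by blast
qed

end
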